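(* For every $k\ge1$ there exist polynomials $q_m^{(k)}(n)\in\mathbb Q[n]$, $1\le m\le k$, each of degree exactly $2m$ with positive leading coefficient, such that for all $n\ge3$ \[ \operatorname{rk}H^{2k}(\overline{\mathcal M}_{0,n},\mathbb Q)=\frac{(k+1)^{k-1}}{(k+1)!}(k+1)^n+\sum_{m=1}^k(-1)^m q_m^{(k)}(n)\,(k+1-m)^n. \]
   Context: $\overline{\mathcal M}_{0,n}$ is the moduli space of stable $n$-pointed rational curves over $\mathbb C$. Equivalently, $\operatorname{rk}H^{2k}(\overline{\mathcal M}_{0,n},\mathbb Q)$ is the coefficient of $t^k$ in $P_n(t)$, where $P_3=1$ and $P_n(t)=P_{n-1}(t)(1+t)+t\sum_{i=3}^{n-2}\binom{n-2}{i-1}P_i(t)P_{n+1-i}(t)$ for $n>3$. *)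

theory Defs
  imports "HOL-Computational_Algebra.Polynomial"
begin

text \<open>Poincare polynomial P_n(t) of the moduli space M_{0,n} (bar), via the recursion
  P_3 = 1, P_n = P_{n-1} (1+t) + t * sum_{i=3}^{n-2} binom(n-2, i-1) P_i P_{n+1-i} for n > 3.
  For n < 3 the value is irrelevant (set to 0).\<close>
function poincare_M0 :: "nat \<Rightarrow> nat poly" where
  "poincare_M0 n =
     (if n < 3 then 0
      else if n = 3 then 1
      else poincare_M0 (n - 1) * [:1, 1:]
           + monom 1 1 * (\<Sum>i\<in>{3..n-2}. smult ((n - 2) choose (i - 1))
                 (poincare_M0 i * poincare_M0 (n + 1 - i))))"
  by auto
termination
  by (relation "measure id") auto

text \<open>rank of H^{2k}(M_{0,n} bar, Q) = coefficient of t^k in P_n(t).\<close>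
definition rk_H :: "nat \<Rightarrow> nat \<Rightarrow> nat" where
  "rk_H n k = coeff (poincare_M0 n) k"

end

theory Submission
  imports Defs
begin

(*
  Call E :: nat => rat poly an exponential polynomial: it stands for n |-> Sum_r E_r(n) r^n.
  By strong induction on k, n |-> rk H^{2k} for n >= 3 is given by an E supported on
  r = 1, ..., k + 1 with deg E_r <= 2(k + 1 - r), whose coefficient of degree 2(k + 1 - r)
  has sign exactly (-1)^(k + 1 - r), and with E_(k+1) the constant (k + 1)^(k - 1)/(k + 1)!;
  then q_m = (-1)^m E_(k+1-m).

  The recursion expresses rk(n, k) - rk(n - 1, k) through rk(n - 1, k - 1) and binomial
  convolutions of rk(., j) with rk(., k - 1 - j).  The binomial convolution of p(s) x^s and
  q(s) y^s is R(N) (x + y)^N with deg R = deg p + deg q and leading coefficient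
  lc(p) lc(q) x^(deg p) y^(deg q) / (x + y)^(deg R), so degrees add and signs multiply; the
  boundary terms removed from the convolutions have lower degree, except for one term at
  r = 1 whose sign is the right one.  Summing the differences back up multiplies leading
  coefficients by r/(r - 1) > 0 for r >= 2 and raises the degree by one at r = 1.  The
  constants at r = k + 1 satisfy a convolution recursion that is solved by Abel's identity.
*)

lemma poly_eqI_of_nat:
  fixes p q :: "'a::{idom,ring_char_0} poly"
  assumes "\<And>n. poly p (of_nat n) = poly q (of_nat n)"
  shows "p = q"
proof (rule ccontr)
  assume "p \<noteq> q"
  then have "finite {x. poly (p - q) x = 0}" by (intro poly_roots_finite) simp
  moreover have "\<nat> \<subseteq> {x. poly (p - q) x = 0}" using assms by (auto elim: Nats_cases)
  ultimately show False using Nats_infinite finite_subset by blast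
qed

lemma degree_pcompose_shift: "degree (pcompose p [:c, 1:]) = degree p"
  for p :: "'a::field poly"
  by (simp add: degree_pcompose)

lemma coeff_pcompose_shift:
  fixes p :: "'a::field poly"
  assumes "degree p \<le> d"
  shows "coeff (pcompose p [:c, 1:]) d = coeff p d"
proof (cases "degree p = d")
  case True
  then show ?thesis using lead_coeff_comp[of "[:c, 1:]" p] degree_pcompose_shift[of p c] by simp
next
  case False
  then show ?thesis using assms degree_pcompose_shift[of p c] by (simp add: coeff_eq_0)
qed

lemma degree_less_if_top_coeff_zero:
  assumes "degree p \<le> d" "coeff p d = 0"
  shows "p = 0 \<or> degree p < d"
  using assms leading_coeff_0_iff[of p] by (cases "degree p = d") auto

lemma smult_sum_right: "smult c (sum f A) = (\<Sum>x\<in>A. smult c (f x))"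
  by (induction A rule: infinite_finite_induct) (simp_all add: smult_add_right)

lemma pderiv_sum: "pderiv (sum f A) = (\<Sum>x\<in>A. pderiv (f x))"
  using higher_pderiv_sum[of 1 f A] by simp

fun binom_poly :: "nat \<Rightarrow> 'a::field_char_0 poly" where
  "binom_poly 0 = 1"
| "binom_poly (Suc d) = smult (1 / of_nat (Suc d)) (binom_poly d * [:- of_nat d, 1:])"

declare binom_poly.simps(2)[simp del]

lemma poly_binom_poly: "poly (binom_poly d) z = z gchoose d"
proof (induction d)
  case (Suc d)
  have "of_nat (Suc d) * (z gchoose Suc d) = (z - of_nat d) * (z gchoose d)"
    using gbinomial_mult_1[of z d] by (simp add: algebra_simps)
  then have "z gchoose Suc d = (z - of_nat d) * (z gchoose d) / of_nat (Suc d)"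
    by (metis nonzero_mult_div_cancel_left of_nat_eq_0_iff nat.distinct(1))
  then show ?case using Suc by (simp add: field_simps binom_poly.simps)
qed simp

lemma poly_binom_poly_of_nat: "poly (binom_poly d) (of_nat n) = of_nat (n choose d)"
  by (simp only: poly_binom_poly binomial_gbinomial)

lemma degree_binom_poly_and_lead:
  "degree (binom_poly d :: 'a::field_char_0 poly) = d \<and> coeff (binom_poly d :: 'a poly) d = 1 / fact d"
proof (induction d)
  case (Suc d)
  let ?p = "binom_poly d * [:- of_nat d, 1:] :: 'a poly"
  have "binom_poly d \<noteq> (0 :: 'a poly)" using Suc by auto
  then have deg: "degree ?p = Suc d"
    using Suc by (simp add: degree_mult_eq del: mult_pCons_right)
  have "coeff ?p (Suc d) = lead_coeff (binom_poly d)"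
    unfolding deg[symmetric] by (simp only: lead_coeff_mult) simp
  moreover have "(1::'a) / of_nat (Suc d) * (1 / fact d) = 1 / fact (Suc d)"
    by (simp add: fact_Suc)
  ultimately show ?case
    using Suc deg by (simp add: binom_poly.simps del: mult_pCons_right of_nat_Suc)
qed simp

lemma degree_binom_poly [simp]: "degree (binom_poly d :: 'a::field_char_0 poly) = d"
  using degree_binom_poly_and_lead by blast

lemma lead_coeff_binom_poly: "coeff (binom_poly d :: 'a::field_char_0 poly) d = 1 / fact d"
  using degree_binom_poly_and_lead by blast

lemma binom_poly_expansion:
  fixes p :: "'a::field_char_0 poly"
  assumes "degree p \<le> d"
  shows "\<exists>\<alpha>. p = (\<Sum>i\<le>d. smult (\<alpha> i) (binom_poly i)) \<and> \<alpha> d = coeff p d * fact d"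
  using assms
proof (induction d arbitrary: p)
  case 0
  then have "p = [:coeff p 0:]" by (metis degree_0_id le_zero_eq)
  then show ?case by (intro exI[of _ "\<lambda>_. coeff p 0"]) (simp add: one_pCons)
next
  case (Suc d)
  define c where "c = coeff p (Suc d) * fact (Suc d)"
  define p1 where "p1 = p - smult c (binom_poly (Suc d))"
  have "degree p1 \<le> Suc d"
    unfolding p1_def using Suc.prems by (simp add: degree_diff_le order_trans[OF degree_smult_le])
  moreover have "coeff p1 (Suc d) = 0"
    by (simp add: p1_def c_def lead_coeff_binom_poly del: fact_Suc)
  ultimately have "degree p1 \<le> d" using degree_less_if_top_coeff_zero by fastforce
  then obtain \<beta> where \<beta>: "p1 = (\<Sum>i\<le>d. smult (\<beta> i) (binom_poly i))" using Suc.IH by blast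
  show ?case
  proof (intro exI conjI)
    have "p = p1 + smult c (binom_poly (Suc d))" by (simp add: p1_def)
    then show "p = (\<Sum>i\<le>Suc d. smult ((\<beta>(Suc d := c)) i) (binom_poly i))"
      using \<beta> by simp
  qed (simp add: c_def)
qed

section \<open>Abel's identity\<close>

lemma alternating_binomial_sum_Suc:
  fixes f :: "nat \<Rightarrow> rat"
  shows "(\<Sum>k\<le>Suc n. (-1)^k * of_nat (Suc n choose k) * f k)
       = (\<Sum>k\<le>n. (-1)^k * of_nat (n choose k) * (f k - f (Suc k)))"
proof -
  have A: "(\<Sum>k\<le>Suc n. (-1)^k * of_nat (Suc n choose k) * f k)
      = f 0 - (\<Sum>k\<le>n. (-1)^k * of_nat (n choose k) * f (Suc k))
            - (\<Sum>k\<le>n. (-1)^k * of_nat (n choose Suc k) * f (Suc k))"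
    by (subst sum.atMost_Suc_shift) (simp add: algebra_simps sum.distrib sum_subtractf sum_negf)
  have B: "(\<Sum>k\<le>n. (-1)^k * of_nat (n choose k) * f k)
      = f 0 - (\<Sum>k\<le>n. (-1)^k * of_nat (n choose Suc k) * f (Suc k))"
  proof -
    have "(\<Sum>k\<le>n. (-1)^k * of_nat (n choose k) * f k) = (\<Sum>k\<le>Suc n. (-1)^k * of_nat (n choose k) * f k)"
      by (simp add: binomial_eq_0)
    also have "\<dots> = f 0 - (\<Sum>k\<le>n. (-1)^k * of_nat (n choose Suc k) * f (Suc k))"
      by (subst sum.atMost_Suc_shift) (simp add: sum_negf[symmetric])
    finally show ?thesis .
  qed
  show ?thesis using A B by (simp add: algebra_simps sum_subtractf)
qed

lemma alternating_binomial_sum_poly: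
  fixes p :: "rat poly"
  assumes "degree p < n"
  shows "(\<Sum>k\<le>n. (-1)^k * of_nat (n choose k) * poly p (of_nat k)) = 0"
  using assms
proof (induction n arbitrary: p)
  case (Suc n)
  define q where "q = p - pcompose p [:1, 1:]"
  have dp: "degree p \<le> n" using Suc.prems by simp
  have "degree q \<le> n" unfolding q_def using dp degree_pcompose_shift[of p 1]
    by (simp add: degree_diff_le)
  moreover have "coeff q n = 0" unfolding q_def using coeff_pcompose_shift[OF dp, of 1] by simp
  ultimately have dq: "q = 0 \<or> degree q < n" by (rule degree_less_if_top_coeff_zero)
  have "(\<Sum>k\<le>Suc n. (-1)^k * of_nat (Suc n choose k) * poly p (of_nat k))
      = (\<Sum>k\<le>n. (-1)^k * of_nat (n choose k) * poly q (of_nat k))"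
    unfolding alternating_binomial_sum_Suc by (simp add: q_def poly_pcompose add.commute)
  also have "\<dots> = 0" using dq Suc.IH by auto
  finally show ?case .
qed simp

definition abel_poly :: "nat \<Rightarrow> rat poly" where
  "abel_poly n = (\<Sum>k\<le>n. smult (of_nat (n choose k) * (1 + of_nat k)^(k - 1)) ([:- of_nat k, 1:]^(n - k)))"

lemma pderiv_abel_poly: "pderiv (abel_poly (Suc n)) = smult (of_nat (Suc n)) (abel_poly n)"
proof -
  have "pderiv (abel_poly (Suc n)) = (\<Sum>k\<le>Suc n. smult (of_nat (Suc n choose k) * (1 + of_nat k)^(k - 1)
            * of_nat (Suc n - k)) ([:- of_nat k, 1:]^(Suc n - k - 1)))"
    unfolding abel_poly_def pderiv_sum
    by (intro sum.cong refl) (simp add: pderiv_smult pderiv_power pderiv_pCons)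
  also have "\<dots> = (\<Sum>k\<le>n. smult (of_nat (Suc n choose k) * (1 + of_nat k)^(k - 1)
            * of_nat (Suc n - k)) ([:- of_nat k, 1:]^(n - k)))"
    by simp
  also have "\<dots> = (\<Sum>k\<le>n. smult (of_nat (Suc n)) (smult (of_nat (n choose k) * (1 + of_nat k)^(k - 1))
            ([:- of_nat k, 1:]^(n - k))))"
  proof (intro sum.cong refl)
    fix k
    have "(Suc n - k) * (Suc n choose k) = Suc n * (n choose k)"
      using binomial_absorb_comp[of "Suc n" k] by simp
    then have "(of_nat (Suc n choose k) :: rat) * of_nat (Suc n - k) = of_nat (Suc n) * of_nat (n choose k)"
      by (metis mult.commute of_nat_mult)
    then have "(of_nat (Suc n choose k) * (1 + of_nat k)^(k - 1) * of_nat (Suc n - k) :: rat)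
        = of_nat (Suc n) * (of_nat (n choose k) * (1 + of_nat k)^(k - 1))"
      by (metis mult.assoc mult.commute)
    then show "smult (of_nat (Suc n choose k) * (1 + of_nat k)^(k - 1) * of_nat (Suc n - k))
            ([:- of_nat k, 1::rat:]^(n - k)) = smult (of_nat (Suc n)) (smult (of_nat (n choose k)
            * (1 + of_nat k)^(k - 1)) ([:- of_nat k, 1:]^(n - k)))"
      by (simp only: smult_smult)
  qed
  also have "\<dots> = smult (of_nat (Suc n)) (abel_poly n)"
    unfolding abel_poly_def by (simp only: smult_sum_right)
  finally show ?thesis .
qed

lemma poly_abel_poly_minus_one: "poly (abel_poly (Suc n)) (-1) = 0"
proof -
  let ?m = "Suc n"
  have "poly (abel_poly ?m) (-1)
      = (\<Sum>k\<le>?m. (-1)^?m * ((-1)^k * of_nat (?m choose k) * poly ([:1, 1:]^n) (of_nat k)))"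
    unfolding abel_poly_def poly_sum
  proof (intro sum.cong refl)
    fix k assume "k \<in> {..?m}"
    then have km: "k \<le> ?m" by simp
    have "(- of_nat k - 1 :: rat) = - (1 + of_nat k)" by simp
    then have e1: "(- of_nat k - 1 :: rat)^(?m - k) = (-1)^(?m - k) * (1 + of_nat k)^(?m - k)"
      by (metis power_minus)
    have "(-1 :: rat)^(?m - k) = (-1)^?m / (-1)^k" using km by (simp add: power_diff)
    then have e2: "(-1 :: rat)^(?m - k) = (-1)^?m * (-1)^k" by (cases "even k") auto
    have e3: "(1 + of_nat k :: rat)^(k - 1) * (1 + of_nat k)^(?m - k) = (1 + of_nat k)^n"
      using km by (cases k) (simp_all flip: power_add)
    have e4: "poly ([:1, 1:]^n) (of_nat k) = (1 + of_nat k :: rat)^n" by (simp add: poly_power)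
    show "poly (smult (of_nat (?m choose k) * (1 + of_nat k)^(k - 1)) ([:- of_nat k, 1:]^(?m - k))) (-1)
        = (-1)^?m * ((-1)^k * of_nat (?m choose k) * poly ([:1, 1::rat:]^n) (of_nat k))"
      unfolding e4 e3[symmetric] by (simp add: poly_power e1 e2 mult_ac)
  qed
  also have "\<dots> = (-1)^?m * (\<Sum>k\<le>?m. (-1)^k * of_nat (?m choose k) * poly ([:1, 1::rat:]^n) (of_nat k))"
    by (rule sum_distrib_left[symmetric])
  also have "\<dots> = 0"
  proof -
    have "degree ([:1, 1::rat:]^n) < ?m" using degree_power_le[of "[:1, 1::rat:]" n] by simp
    then have "(\<Sum>k\<le>?m. (-1)^k * of_nat (?m choose k) * poly ([:1, 1::rat:]^n) (of_nat k)) = 0"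
      by (rule alternating_binomial_sum_poly)
    then show ?thesis by simp
  qed
  finally show ?thesis .
qed

lemma abel_poly_eq: "abel_poly n = ([:1, 1:]^n :: rat poly)"
proof (induction n)
  case (Suc n)
  have "pderiv (abel_poly (Suc n) - [:1, 1:]^Suc n :: rat poly) = 0"
    by (simp add: pderiv_diff pderiv_abel_poly Suc pderiv_power_Suc pderiv_pCons del: power_Suc)
  then obtain h where h: "abel_poly (Suc n) - [:1, 1:]^Suc n = ([:h:] :: rat poly)"
    using pderiv_iszero by blast
  have "h = poly (abel_poly (Suc n) - [:1, 1:]^Suc n) (-1)" using h by simp
  also have "\<dots> = 0" by (simp add: poly_abel_poly_minus_one poly_power del: power_Suc)
  finally show ?case using h by simp
qed (simp add: abel_poly_def)

lemma abel_identity: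
  "(\<Sum>k\<le>n. of_nat (n choose k) * (1 + of_nat k)^(k - 1) * (y - of_nat k)^(n - k)) = (1 + y :: rat)^n"
  using arg_cong[OF abel_poly_eq[of n], of "\<lambda>p. poly p y"]
  by (simp add: abel_poly_def poly_sum poly_power add.commute)

section \<open>Binomial convolution\<close>

definition binom_conv :: "rat \<Rightarrow> rat \<Rightarrow> rat poly \<Rightarrow> rat poly \<Rightarrow> nat \<Rightarrow> rat" where
  "binom_conv x y p q N =
     (\<Sum>s\<le>N. of_nat (N choose s) * (poly p (of_nat s) * x^s) * (poly q (of_nat (N - s)) * y^(N - s)))"

lemma binom_conv_sum_left:
  "binom_conv x y (\<Sum>i\<in>I. smult (a i) (f i)) q N = (\<Sum>i\<in>I. a i * binom_conv x y (f i) q N)"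
  unfolding binom_conv_def poly_sum
  by (simp add: sum_distrib_left sum_distrib_right mult_ac) (rule sum.swap)

lemma binom_conv_sum_right:
  "binom_conv x y p (\<Sum>j\<in>J. smult (b j) (g j)) N = (\<Sum>j\<in>J. b j * binom_conv x y p (g j) N)"
  unfolding binom_conv_def poly_sum
  by (simp add: sum_distrib_left sum_distrib_right mult_ac) (rule sum.swap)

lemma trinomial_rearrange:
  fixes a b t u :: nat
  shows "((a+b+t+u) choose (a+t)) * ((a+t) choose a) * ((b+u) choose b)
       = ((a+b+t+u) choose (a+b)) * ((a+b) choose a) * ((t+u) choose t)"
proof -
  let ?N = "a+b+t+u"
  have e1: "(of_nat (?N choose (a+t)) :: rat) = fact ?N / (fact (a+t) * fact (b+u))"
    using binomial_fact[of "a+t" ?N] by (simp add: add.commute add.left_commute)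
  have e2: "(of_nat ((a+t) choose a) :: rat) = fact (a+t) / (fact a * fact t)"
    using binomial_fact[of a "a+t"] by simp
  have e3: "(of_nat ((b+u) choose b) :: rat) = fact (b+u) / (fact b * fact u)"
    using binomial_fact[of b "b+u"] by simp
  have f1: "(of_nat (?N choose (a+b)) :: rat) = fact ?N / (fact (a+b) * fact (t+u))"
    using binomial_fact[of "a+b" ?N] by (simp add: add.assoc)
  have f2: "(of_nat ((a+b) choose a) :: rat) = fact (a+b) / (fact a * fact b)"
    using binomial_fact[of a "a+b"] by simp
  have f3: "(of_nat ((t+u) choose t) :: rat) = fact (t+u) / (fact t * fact u)"
    using binomial_fact[of t "t+u"] by simp
  have "(of_nat ((?N choose (a+t)) * ((a+t) choose a) * ((b+u) choose b)) :: rat)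
     = of_nat ((?N choose (a+b)) * ((a+b) choose a) * ((t+u) choose t))"
    unfolding of_nat_mult e1 e2 e3 f1 f2 f3 by (simp add: field_simps)
  then show ?thesis using of_nat_eq_iff by blast
qed

lemma binom_conv_binom_poly:
  assumes xy: "x + y \<noteq> 0"
  shows "binom_conv x y (binom_poly a) (binom_poly b) N
       = of_nat ((a+b) choose a) * x^a * y^b / (x+y)^(a+b) * of_nat (N choose (a+b)) * (x+y)^N"
proof -
  define f where "f s = (of_nat ((N choose s) * (s choose a) * ((N-s) choose b)) :: rat) * x^s * y^(N-s)" for s
  have conv_eq: "binom_conv x y (binom_poly a) (binom_poly b) N = (\<Sum>s\<le>N. f s)"
    unfolding binom_conv_def f_def
    by (intro sum.cong refl) (simp only: poly_binom_poly_of_nat, simp add: algebra_simps)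
  have f_zero: "f s = 0" if "s < a \<or> N - s < b" for s
    using that unfolding f_def by auto
  show ?thesis
  proof (cases "N < a + b")
    case True
    then have "(\<Sum>s\<le>N. f s) = 0" using f_zero by (intro sum.neutral) force
    then show ?thesis using True conv_eq by simp
  next
    case False
    then obtain M where N: "N = a + b + M" by (metis add.commute le_iff_add not_less)
    have "(\<Sum>s\<le>N. f s) = (\<Sum>s\<in>{a..a+M}. f s)"
      by (rule sum.mono_neutral_right) (use N f_zero in auto)
    also have "\<dots> = (\<Sum>t\<le>M. f (t + a))"
      using sum.shift_bounds_cl_nat_ivl[of f 0 a M] by (simp add: add.commute atLeast0AtMost)
    also have "\<dots> = (\<Sum>t\<le>M. of_nat ((N choose (a+b)) * ((a+b) choose a)) * x^a * y^b
                        * (of_nat (M choose t) * x^t * y^(M-t)))"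
    proof (intro sum.cong refl)
      fix t assume "t \<in> {..M}"
      then obtain u where u: "M = t + u" by (metis atMost_iff le_iff_add)
      have "(N choose (t+a)) * ((t+a) choose a) * ((N-(t+a)) choose b)
            = (N choose (a+b)) * ((a+b) choose a) * (M choose t)"
        using trinomial_rearrange[of a b t u] N u by (simp add: add.commute add.left_commute)
      moreover have "N - (t + a) = b + (M - t)" using N u by simp
      ultimately show "f (t + a) = of_nat ((N choose (a+b)) * ((a+b) choose a)) * x^a * y^b
                        * (of_nat (M choose t) * x^t * y^(M-t))"
        unfolding f_def by (simp add: power_add algebra_simps)
    qed
    also have "\<dots> = of_nat ((N choose (a+b)) * ((a+b) choose a)) * x^a * y^b * (x+y)^M"
      by (simp add: sum_distrib_left binomial_ring)
    also have "(x+y)^M = (x+y)^N / (x+y)^(a+b)"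
      using xy N by (simp add: power_add)
    finally show ?thesis using conv_eq by (simp add: field_simps)
  qed
qed

lemma coeff_binom_poly_double_sum:
  "(\<Sum>i\<le>a. \<Sum>j\<le>b. c i j * coeff (binom_poly (i + j) :: rat poly) (a + b)) = c a b / fact (a + b)"
proof -
  have inner: "(\<Sum>j\<le>b. c i j * coeff (binom_poly (i + j) :: rat poly) (a + b))
      = (if i = a then c a b / fact (a + b) else 0)" if "i \<le> a" for i
  proof (cases "i = a")
    case True
    have "(\<Sum>j\<le>b. c i j * coeff (binom_poly (i + j) :: rat poly) (a + b))
        = (\<Sum>j\<le>b. if j = b then c a b / fact (a + b) else 0)"
      by (intro sum.cong refl) (auto simp: True lead_coeff_binom_poly coeff_eq_0)
    then show ?thesis using True by simp
  next
    case False
    then show ?thesis using that by (auto intro!: sum.neutral simp: coeff_eq_0)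
  qed
  have "(\<Sum>i\<le>a. \<Sum>j\<le>b. c i j * coeff (binom_poly (i + j) :: rat poly) (a + b))
      = (\<Sum>i\<le>a. if i = a then c a b / fact (a + b) else 0)"
    using inner by (intro sum.cong refl) simp
  then show ?thesis by simp
qed

text \<open>Expanding \<open>p\<close> and \<open>q\<close> in the basis \<open>binom_poly\<close> reduces this to
  \<open>binom_conv_binom_poly\<close>.\<close>
lemma binom_conv_poly_exists:
  assumes xy: "x + y \<noteq> 0" and p: "degree p \<le> a" and q: "degree q \<le> b"
  shows "\<exists>R. degree R \<le> a + b \<and>
           coeff R (a + b) = coeff p a * coeff q b * x^a * y^b / (x + y)^(a + b) \<and>
           (\<forall>N. binom_conv x y p q N = poly R (of_nat N) * (x + y)^N)"
proof -
  obtain \<alpha> where \<alpha>: "p = (\<Sum>i\<le>a. smult (\<alpha> i) (binom_poly i))" "\<alpha> a = coeff p a * fact a"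
    using binom_poly_expansion[OF p] by blast
  obtain \<beta> where \<beta>: "q = (\<Sum>j\<le>b. smult (\<beta> j) (binom_poly j))" "\<beta> b = coeff q b * fact b"
    using binom_poly_expansion[OF q] by blast
  define \<gamma> where "\<gamma> i j = of_nat ((i + j) choose i) * x^i * y^j / (x + y)^(i + j)" for i j
  define R where "R = (\<Sum>i\<le>a. \<Sum>j\<le>b. smult (\<alpha> i * \<beta> j * \<gamma> i j) (binom_poly (i + j)))"
  have "degree R \<le> a + b"
    unfolding R_def by (intro degree_sum_le) (auto intro: order_trans[OF degree_smult_le])
  moreover have "coeff R (a + b) = \<alpha> a * \<beta> b * \<gamma> a b / fact (a + b)"
    unfolding R_def coeff_sum coeff_smult by (rule coeff_binom_poly_double_sum)
  moreover have "\<alpha> a * \<beta> b * \<gamma> a b / fact (a + b) = coeff p a * coeff q b * x^a * y^b / (x + y)^(a + b)"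
  proof -
    have "fact a * fact b * of_nat ((a + b) choose a) / fact (a + b) = (1 :: rat)"
      using binomial_fact[of a "a + b", where 'a=rat] by (simp add: field_simps)
    moreover have "\<alpha> a * \<beta> b * \<gamma> a b / fact (a + b) = coeff p a * coeff q b * x^a * y^b / (x + y)^(a + b)
        * (fact a * fact b * of_nat ((a + b) choose a) / fact (a + b))"
      by (simp add: \<alpha>(2) \<beta>(2) \<gamma>_def)
    ultimately show ?thesis by simp
  qed
  moreover have "binom_conv x y p q N = poly R (of_nat N) * (x + y)^N" for N
    unfolding R_def \<alpha>(1) \<beta>(1) binom_conv_sum_left binom_conv_sum_right binom_conv_binom_poly[OF xy]
    by (simp add: poly_sum poly_binom_poly_of_nat \<gamma>_def sum_distrib_left sum_distrib_right mult_ac)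
      (rule sum.swap)
  ultimately show ?thesis by metis
qed

definition binom_conv_poly :: "rat \<Rightarrow> rat \<Rightarrow> rat poly \<Rightarrow> rat poly \<Rightarrow> rat poly" where
  "binom_conv_poly x y p q = (THE R. \<forall>N. binom_conv x y p q N = poly R (of_nat N) * (x + y)^N)"

lemma binom_conv_poly_eqI:
  assumes xy: "x + y \<noteq> 0" and R: "\<And>N. binom_conv x y p q N = poly R (of_nat N) * (x + y)^N"
  shows "binom_conv_poly x y p q = R"
  unfolding binom_conv_poly_def
proof (rule the_equality)
  fix R' assume "\<forall>N. binom_conv x y p q N = poly R' (of_nat N) * (x + y)^N"
  with R xy show "R' = R" by (intro poly_eqI_of_nat) simp
qed (use R in blast)

lemma binom_conv_poly:
  assumes "x + y \<noteq> 0"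
  shows "binom_conv x y p q N = poly (binom_conv_poly x y p q) (of_nat N) * (x + y)^N"
  using binom_conv_poly_exists[OF assms order.refl order.refl] binom_conv_poly_eqI[OF assms] by metis

lemma binom_conv_poly_degree:
  assumes "x + y \<noteq> 0" "degree p \<le> a" "degree q \<le> b"
  shows "degree (binom_conv_poly x y p q) \<le> a + b"
    and "coeff (binom_conv_poly x y p q) (a + b) = coeff p a * coeff q b * x^a * y^b / (x + y)^(a + b)"
  using binom_conv_poly_exists[OF assms] binom_conv_poly_eqI[OF assms(1)] by metis+

lemma binom_conv_poly_zero:
  assumes "x + y \<noteq> 0" "p = 0 \<or> q = 0"
  shows "binom_conv_poly x y p q = 0"
  using assms by (intro binom_conv_poly_eqI) (auto simp: binom_conv_def)

section \<open>Antidifferences\<close>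

lemma antidiff_exists_one:
  fixes p :: "rat poly"
  assumes "degree p \<le> d"
  shows "\<exists>Q. degree Q \<le> d + 1 \<and> coeff Q (d + 1) = coeff p d / of_nat (d + 1) \<and>
             (\<forall>z. poly Q z - poly Q (z - 1) = poly p z)"
proof -
  obtain \<alpha> where \<alpha>: "p = (\<Sum>i\<le>d. smult (\<alpha> i) (binom_poly i))" "\<alpha> d = coeff p d * fact d"
    using binom_poly_expansion[OF assms] by blast
  define B :: "nat \<Rightarrow> rat poly" where "B i = pcompose (binom_poly (Suc i)) [:1, 1:]" for i
  define Q where "Q = (\<Sum>i\<le>d. smult (\<alpha> i) (B i))"
  have B_diff: "poly (B i) z - poly (B i) (z - 1) = poly (binom_poly i) z" for i z
  proof -
    have "(z + 1 gchoose Suc i) = (z gchoose i) + (z gchoose Suc i)" by (rule gbinomial_Suc_Suc)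
    then show ?thesis by (simp add: B_def poly_pcompose poly_binom_poly add.commute[of 1 z])
  qed
  have "degree Q \<le> d + 1"
    unfolding Q_def B_def
    by (intro degree_sum_le) (auto intro: order_trans[OF degree_smult_le] simp: degree_pcompose_shift)
  moreover have "coeff Q (d + 1) = coeff p d / of_nat (d + 1)"
  proof -
    have "coeff Q (d + 1) = (\<Sum>i\<le>d. if i = d then \<alpha> d / fact (d + 1) else 0)"
      unfolding Q_def coeff_sum
    proof (intro sum.cong refl)
      fix i assume "i \<in> {..d}"
      then show "coeff (smult (\<alpha> i) (B i)) (d + 1) = (if i = d then \<alpha> d / fact (d + 1) else 0)"
        using lead_coeff_binom_poly[of "Suc d", where 'a=rat]
        by (auto simp: B_def coeff_pcompose_shift coeff_eq_0 degree_pcompose_shift)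
    qed
    then show ?thesis by (simp add: \<alpha>(2))
  qed
  moreover have "poly Q z - poly Q (z - 1) = poly p z" for z
  proof -
    have "poly Q z - poly Q (z - 1) = (\<Sum>i\<le>d. \<alpha> i * (poly (B i) z - poly (B i) (z - 1)))"
      unfolding Q_def poly_sum by (simp add: sum_subtractf right_diff_distrib)
    then show ?thesis unfolding B_diff \<alpha>(1) by (simp add: poly_sum)
  qed
  ultimately show ?thesis by blast
qed

lemma antidiff_exists_ne_one:
  fixes \<rho> :: rat
  assumes \<rho>: "\<rho> \<noteq> 0" "\<rho> \<noteq> 1" and p: "degree p \<le> d"
  shows "\<exists>Q. degree Q \<le> d \<and> coeff Q d = coeff p d * \<rho> / (\<rho> - 1) \<and>
             (\<forall>z. poly Q z - poly Q (z - 1) / \<rho> = poly p z)"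
proof -
  define T where "T Q = Q - smult (1 / \<rho>) (pcompose Q [:-1, 1:])" for Q
  have poly_T: "poly (T Q) z = poly Q z - poly Q (z - 1) / \<rho>" for Q z
    by (simp add: T_def poly_pcompose)
  have T_add: "T (Q0 + Q1) = T Q0 + T Q1" for Q0 Q1
    by (simp add: T_def pcompose_add smult_add_right)
  have T_top: "degree (T Q) \<le> d \<and> coeff (T Q) d = (1 - 1 / \<rho>) * coeff Q d" if "degree Q \<le> d" for Q d
    using that coeff_pcompose_shift[OF that, of "-1"] degree_pcompose_shift[of Q "-1"]
    by (auto simp: T_def algebra_simps intro!: degree_diff_le order_trans[OF degree_smult_le])
  have "\<exists>Q. degree Q \<le> d \<and> coeff Q d = coeff p d * \<rho> / (\<rho> - 1) \<and> T Q = p" if "degree p \<le> d" for p d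
    using that
  proof (induction d arbitrary: p rule: less_induct)
    case (less d)
    define Q0 where "Q0 = monom (coeff p d * \<rho> / (\<rho> - 1)) d"
    define p1 where "p1 = p - T Q0"
    have "degree Q0 \<le> d" by (simp add: Q0_def degree_monom_le)
    moreover have "(1 - 1 / \<rho>) * (coeff p d * \<rho> / (\<rho> - 1)) = coeff p d"
      using \<rho> by (simp add: field_simps)
    ultimately have Q0: "degree (T Q0) \<le> d" "coeff (T Q0) d = coeff p d"
      using T_top[of Q0 d] by (simp_all add: Q0_def)
    then have "degree p1 \<le> d" "coeff p1 d = 0"
      using less.prems by (auto simp: p1_def intro: degree_diff_le)
    then consider "p1 = 0" | "degree p1 < d" using degree_less_if_top_coeff_zero by blast
    then show ?case
    proof cases
      case 1
      then show ?thesis using \<open>degree Q0 \<le> d\<close> by (intro exI[of _ Q0]) (simp add: p1_def Q0_def)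
    next
      case 2
      then obtain Q1 where Q1: "degree Q1 \<le> degree p1" "T Q1 = p1" using less.IH by blast
      have "coeff Q1 d = 0" using Q1(1) 2 by (simp add: coeff_eq_0)
      then show ?thesis using Q1 2 \<open>degree Q0 \<le> d\<close>
        by (intro exI[of _ "Q0 + Q1"]) (auto simp: T_add p1_def Q0_def degree_add_le)
    qed
  qed
  then show ?thesis using p poly_T by metis
qed

text \<open>The identity in \<open>is_antidiff r d p Q\<close> says \<open>Q(n) r\<^sup>n - Q(n - 1) r\<^sup>n\<^sup>-\<^sup>1 = p(n) r\<^sup>n\<close>.\<close>
definition is_antidiff :: "nat \<Rightarrow> nat \<Rightarrow> rat poly \<Rightarrow> rat poly \<Rightarrow> bool" where
  "is_antidiff r d p Q \<longleftrightarrow> (\<forall>z. poly Q z - poly Q (z - 1) / of_nat r = poly p z) \<and>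
     (if r = 1 then degree Q \<le> d + 1 \<and> coeff Q (d + 1) = coeff p d / of_nat (d + 1)
      else degree Q \<le> d \<and> coeff Q d = coeff p d * of_nat r / (of_nat r - 1))"

lemma is_antidiff_exists:
  assumes "1 \<le> r" "degree p \<le> d"
  shows "\<exists>Q. is_antidiff r d p Q"
proof (cases "r = 1")
  case True
  then show ?thesis using antidiff_exists_one[OF assms(2)] unfolding is_antidiff_def by auto
next
  case False
  then have "(of_nat r :: rat) \<noteq> 0" "(of_nat r :: rat) \<noteq> 1" using assms(1) by auto
  from antidiff_exists_ne_one[OF this assms(2)] show ?thesis
    using False unfolding is_antidiff_def by auto
qed

section \<open>Exponential polynomials\<close>

text \<open>\<open>E :: expoly\<close> encodes the sequence \<open>n \<mapsto> \<Sum>\<^sub>r E r (n) r\<^sup>n\<close>; \<open>supported M E\<close> restricts the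
  bases to \<open>1, \<dots>, M\<close>.\<close>
type_synonym expoly = "nat \<Rightarrow> rat poly"

definition expoly_val :: "nat \<Rightarrow> expoly \<Rightarrow> nat \<Rightarrow> rat" where
  "expoly_val M E n = (\<Sum>r\<le>M. poly (E r) (of_nat n) * of_nat r ^ n)"

definition supported :: "nat \<Rightarrow> expoly \<Rightarrow> bool" where
  "supported M E \<longleftrightarrow> (\<forall>r. r = 0 \<or> M < r \<longrightarrow> E r = 0)"

definition expoly_add :: "expoly \<Rightarrow> expoly \<Rightarrow> expoly" where
  "expoly_add E1 E2 = (\<lambda>r. E1 r + E2 r)"

definition expoly_smult :: "rat \<Rightarrow> expoly \<Rightarrow> expoly" where
  "expoly_smult c E = (\<lambda>r. smult c (E r))"

definition expoly_sum :: "('a \<Rightarrow> expoly) \<Rightarrow> 'a set \<Rightarrow> expoly" where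
  "expoly_sum f A = (\<lambda>r. \<Sum>j\<in>A. f j r)"

definition expoly_shift :: "nat \<Rightarrow> expoly \<Rightarrow> expoly" where
  "expoly_shift c E = (\<lambda>r. smult (of_nat r ^ c) (pcompose (E r) [:of_nat c, 1:]))"

definition expoly_shift_back :: "expoly \<Rightarrow> expoly" where
  "expoly_shift_back E = (\<lambda>r. smult (1 / of_nat r) (pcompose (E r) [:-1, 1:]))"

definition expoly_mult_n_minus_2 :: "expoly \<Rightarrow> expoly" where
  "expoly_mult_n_minus_2 E = (\<lambda>r. E r * [:-2, 1:])"

definition expoly_const :: "rat \<Rightarrow> expoly" where
  "expoly_const c = (\<lambda>r. if r = 1 then [:c:] else 0)"

text \<open>The terms \<open>x = 0\<close> and \<open>x = r\<close> are left out; they vanish for supported arguments.\<close>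
definition expoly_conv :: "expoly \<Rightarrow> expoly \<Rightarrow> expoly" where
  "expoly_conv E1 E2 =
     (\<lambda>r. \<Sum>x\<in>{1..<r}. binom_conv_poly (of_nat x) (of_nat (r - x)) (E1 x) (E2 (r - x)))"

definition expoly_antidiff :: "nat \<Rightarrow> (nat \<Rightarrow> nat) \<Rightarrow> expoly \<Rightarrow> expoly" where
  "expoly_antidiff M D E = (\<lambda>r. if r = 0 \<or> M < r then 0 else SOME Q. is_antidiff r (D r) (E r) Q)"

lemma expoly_add_apply [simp]: "expoly_add E1 E2 r = E1 r + E2 r"
  by (simp add: expoly_add_def)

lemma expoly_smult_apply [simp]: "expoly_smult c E r = smult c (E r)"
  by (simp add: expoly_smult_def)

lemma supported_zero: "supported M E \<Longrightarrow> r = 0 \<or> M < r \<Longrightarrow> E r = 0"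
  unfolding supported_def by blast

lemma supported_mono: "supported M E \<Longrightarrow> M \<le> M' \<Longrightarrow> supported M' E"
  by (simp add: supported_def)

lemma supported_add: "supported M E1 \<Longrightarrow> supported M E2 \<Longrightarrow> supported M (expoly_add E1 E2)"
  by (simp add: supported_def)

lemma supported_smult: "supported M E \<Longrightarrow> supported M (expoly_smult c E)"
  by (simp add: supported_def)

lemma supported_shift: "supported M E \<Longrightarrow> supported M (expoly_shift c E)"
  by (simp add: supported_def expoly_shift_def)

lemma supported_shift_back: "supported M E \<Longrightarrow> supported M (expoly_shift_back E)"
  by (simp add: supported_def expoly_shift_back_def)

lemma supported_mult_n_minus_2: "supported M E \<Longrightarrow> supported M (expoly_mult_n_minus_2 E)"
  by (simp add: supported_def expoly_mult_n_minus_2_def)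

lemma supported_const: "1 \<le> M \<Longrightarrow> supported M (expoly_const c)"
  by (simp add: supported_def expoly_const_def)

lemma supported_antidiff: "supported M (expoly_antidiff M D E)"
  by (simp add: supported_def expoly_antidiff_def)

lemma supported_conv:
  assumes "supported M1 E1" "supported M2 E2"
  shows "supported (M1 + M2) (expoly_conv E1 E2)"
  unfolding supported_def expoly_conv_def
proof (intro allI impI sum.neutral ballI)
  fix r x assume r: "r = 0 \<or> M1 + M2 < r" and x: "x \<in> {1..<r}"
  then have "E1 x = 0 \<or> E2 (r - x) = 0"
    using assms supported_zero by (cases "x \<le> M1") auto
  then show "binom_conv_poly (of_nat x) (of_nat (r - x)) (E1 x) (E2 (r - x)) = 0"
    using x by (intro binom_conv_poly_zero) auto
qed

lemma expoly_val_mono: "supported M E \<Longrightarrow> M \<le> M' \<Longrightarrow> expoly_val M' E n = expoly_val M E n"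
  unfolding expoly_val_def supported_def by (rule sum.mono_neutral_right) auto

lemma expoly_val_add: "expoly_val M (expoly_add E1 E2) n = expoly_val M E1 n + expoly_val M E2 n"
  by (simp add: expoly_val_def sum.distrib algebra_simps)

lemma expoly_val_smult: "expoly_val M (expoly_smult c E) n = c * expoly_val M E n"
  by (simp add: expoly_val_def sum_distrib_left algebra_simps)

lemma expoly_val_sum: "expoly_val M (expoly_sum f A) n = (\<Sum>j\<in>A. expoly_val M (f j) n)"
  unfolding expoly_val_def expoly_sum_def by (simp add: poly_sum sum_distrib_right) (rule sum.swap)

lemma expoly_val_shift: "expoly_val M (expoly_shift c E) n = expoly_val M E (n + c)"
  unfolding expoly_val_def expoly_shift_def
  by (intro sum.cong refl) (simp add: poly_pcompose power_add algebra_simps)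

lemma expoly_val_shift_back:
  assumes "supported M E" "1 \<le> n"
  shows "expoly_val M (expoly_shift_back E) n = expoly_val M E (n - 1)"
  unfolding expoly_val_def expoly_shift_back_def
proof (intro sum.cong refl)
  fix r
  have "(of_nat r :: rat) ^ n = of_nat r * of_nat r ^ (n - 1)" "(of_nat (n - 1) :: rat) = of_nat n - 1"
    using assms(2) by (simp_all add: of_nat_diff flip: power_Suc)
  moreover have "E 0 = 0" using assms(1) by (simp add: supported_def)
  ultimately show "poly (smult (1 / of_nat r) (pcompose (E r) [:-1, 1:])) (of_nat n) * of_nat r ^ n
      = poly (E r) (of_nat (n - 1)) * of_nat r ^ (n - 1)"
    by (cases "r = 0") (simp_all add: poly_pcompose algebra_simps)
qed

lemma expoly_val_mult_n_minus_2:
  "expoly_val M (expoly_mult_n_minus_2 E) n = (of_nat n - 2) * expoly_val M E n"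
  by (simp add: expoly_val_def expoly_mult_n_minus_2_def sum_distrib_left algebra_simps)

lemma expoly_val_const: "1 \<le> M \<Longrightarrow> expoly_val M (expoly_const c) n = c"
  unfolding expoly_val_def expoly_const_def
  by (subst sum.mono_neutral_right[of "{..M}" "{1}"]) auto

lemma expoly_val_binom_conv:
  "(\<Sum>s\<le>N. of_nat (N choose s) * expoly_val M1 E1 s * expoly_val M2 E2 (N - s))
     = (\<Sum>x\<le>M1. \<Sum>y\<le>M2. binom_conv (of_nat x) (of_nat y) (E1 x) (E2 y) N)"
proof -
  have "(\<Sum>s\<le>N. of_nat (N choose s) * expoly_val M1 E1 s * expoly_val M2 E2 (N - s))
      = (\<Sum>s\<le>N. \<Sum>x\<le>M1. \<Sum>y\<le>M2. of_nat (N choose s) * (poly (E1 x) (of_nat s) * of_nat x ^ s)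
                * (poly (E2 y) (of_nat (N - s)) * of_nat y ^ (N - s)))"
    unfolding expoly_val_def
    by (simp add: sum_distrib_left sum_distrib_right mult.assoc) (rule sum.cong[OF refl], rule sum.swap)
  also have "\<dots> = (\<Sum>x\<le>M1. \<Sum>y\<le>M2. binom_conv (of_nat x) (of_nat y) (E1 x) (E2 y) N)"
    unfolding binom_conv_def by (subst sum.swap, rule sum.cong[OF refl], rule sum.swap)
  finally show ?thesis .
qed

lemma expoly_val_conv:
  assumes s1: "supported M1 E1" and s2: "supported M2 E2"
  shows "expoly_val (M1 + M2) (expoly_conv E1 E2) N =
         (\<Sum>s\<le>N. of_nat (N choose s) * expoly_val M1 E1 s * expoly_val M2 E2 (N - s))"
proof -
  define G where "G x y = binom_conv (of_nat x) (of_nat y) (E1 x) (E2 y) N" for x y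
  have G_zero: "G x y = 0" if "E1 x = 0 \<or> E2 y = 0" for x y
    using that by (auto simp: G_def binom_conv_def)
  have "(\<Sum>s\<le>N. of_nat (N choose s) * expoly_val M1 E1 s * expoly_val M2 E2 (N - s))
      = (\<Sum>x\<le>M1. \<Sum>y\<le>M2. G x y)"
    unfolding G_def by (rule expoly_val_binom_conv)
  also have "\<dots> = (\<Sum>(x, y)\<in>{(x, y). x + y \<le> M1 + M2}. G x y)"
    unfolding sum.cartesian_product
  proof (rule sum.mono_neutral_left)
    show "finite {(x, y). x + y \<le> M1 + M2}"
      by (rule finite_subset[of _ "{..M1 + M2} \<times> {..M1 + M2}"]) auto
    show "\<forall>i\<in>{(x, y). x + y \<le> M1 + M2} - {..M1} \<times> {..M2}. (case i of (x, y) \<Rightarrow> G x y) = 0"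
    proof
      fix i assume "i \<in> {(x, y). x + y \<le> M1 + M2} - {..M1} \<times> {..M2}"
      then obtain x y where "i = (x, y)" "M1 < x \<or> M2 < y" by (cases i) (auto simp: not_le)
      then show "(case i of (x, y) \<Rightarrow> G x y) = 0"
        using G_zero supported_zero[OF s1] supported_zero[OF s2] by auto
    qed
  qed auto
  also have "\<dots> = (\<Sum>r\<le>M1 + M2. \<Sum>x\<le>r. G x (r - x))"
    by (rule sum.triangle_reindex_eq)
  also have "\<dots> = (\<Sum>r\<le>M1 + M2. \<Sum>x\<in>{1..<r}. G x (r - x))"
  proof (rule sum.cong[OF refl])
    fix r
    show "(\<Sum>x\<le>r. G x (r - x)) = (\<Sum>x\<in>{1..<r}. G x (r - x))"
    proof (rule sum.mono_neutral_right)
      show "\<forall>x\<in>{..r} - {1..<r}. G x (r - x) = 0"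
      proof
        fix x assume "x \<in> {..r} - {1..<r}"
        then have "x = 0 \<or> r - x = 0" by auto
        then show "G x (r - x) = 0"
          using G_zero supported_zero[OF s1] supported_zero[OF s2] by auto
      qed
    qed auto
  qed
  also have "\<dots> = expoly_val (M1 + M2) (expoly_conv E1 E2) N"
    unfolding expoly_val_def expoly_conv_def poly_sum sum_distrib_right
    by (intro sum.cong refl) (simp add: G_def binom_conv_poly)
  finally show ?thesis ..
qed

lemma expoly_antidiff_is_antidiff:
  assumes "1 \<le> r" "r \<le> M" "degree (E r) \<le> D r"
  shows "is_antidiff r (D r) (E r) (expoly_antidiff M D E r)"
  using someI_ex[OF is_antidiff_exists[OF assms(1,3)]] assms(1,2)
  by (simp add: expoly_antidiff_def)

lemma expoly_val_antidiff:
  assumes "supported M E" "\<forall>r. degree (E r) \<le> D r" "1 \<le> n"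
  shows "expoly_val M (expoly_antidiff M D E) n - expoly_val M (expoly_antidiff M D E) (n - 1)
       = expoly_val M E n"
  unfolding expoly_val_def sum_subtractf[symmetric]
proof (intro sum.cong refl)
  fix r assume "r \<in> {..M}"
  let ?Q = "expoly_antidiff M D E r"
  show "poly ?Q (of_nat n) * of_nat r ^ n - poly ?Q (of_nat (n - 1)) * of_nat r ^ (n - 1)
      = poly (E r) (of_nat n) * of_nat r ^ n"
  proof (cases "r = 0")
    case True
    then show ?thesis using assms(1) by (simp add: supported_def expoly_antidiff_def)
  next
    case False
    then have "is_antidiff r (D r) (E r) ?Q"
      using \<open>r \<in> {..M}\<close> assms(2) by (intro expoly_antidiff_is_antidiff) auto
    then have "poly ?Q (of_nat n) - poly ?Q (of_nat n - 1) / of_nat r = poly (E r) (of_nat n)"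
      by (simp add: is_antidiff_def)
    then have A: "poly ?Q (of_nat n) * of_nat r - poly ?Q (of_nat n - 1) = poly (E r) (of_nat n) * of_nat r"
      using False by (simp add: field_simps)
    have pw: "(of_nat r :: rat) ^ n = of_nat r * of_nat r ^ (n - 1)"
      "(of_nat (n - 1) :: rat) = of_nat n - 1"
      using assms(3) by (simp_all add: of_nat_diff flip: power_Suc)
    then have "poly ?Q (of_nat n) * of_nat r ^ n - poly ?Q (of_nat (n - 1)) * of_nat r ^ (n - 1)
        = (poly ?Q (of_nat n) * of_nat r - poly ?Q (of_nat n - 1)) * of_nat r ^ (n - 1)"
      by (simp add: algebra_simps)
    then show ?thesis unfolding A using pw by (simp add: algebra_simps)
  qed
qed

section \<open>Degree bounds and signs of top coefficients\<close>

definition deg_bounded :: "nat \<Rightarrow> (nat \<Rightarrow> nat) \<Rightarrow> expoly \<Rightarrow> bool" where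
  "deg_bounded M D E \<longleftrightarrow> supported M E \<and> (\<forall>r. degree (E r) \<le> D r)"

definition top_signs :: "nat \<Rightarrow> (nat \<Rightarrow> nat) \<Rightarrow> (nat \<Rightarrow> rat) \<Rightarrow> expoly \<Rightarrow> bool" where
  "top_signs M D s E \<longleftrightarrow> deg_bounded M D E \<and> (\<forall>r. 0 \<le> s r * coeff (E r) (D r))"

definition top_sign_strict :: "nat \<Rightarrow> (nat \<Rightarrow> nat) \<Rightarrow> (nat \<Rightarrow> rat) \<Rightarrow> expoly \<Rightarrow> bool" where
  "top_sign_strict r D s E \<longleftrightarrow> 0 < s r * coeff (E r) (D r)"

lemma top_signs_deg_bounded: "top_signs M D s E \<Longrightarrow> deg_bounded M D E"
  by (simp add: top_signs_def)

lemma deg_bounded_supported: "deg_bounded M D E \<Longrightarrow> supported M E"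
  by (simp add: deg_bounded_def)

lemma deg_bounded_degree: "deg_bounded M D E \<Longrightarrow> degree (E r) \<le> D r"
  by (simp add: deg_bounded_def)

lemma deg_bounded_add: "deg_bounded M D E1 \<Longrightarrow> deg_bounded M D E2 \<Longrightarrow> deg_bounded M D (expoly_add E1 E2)"
  unfolding deg_bounded_def using supported_add by (auto intro: degree_add_le)

lemma top_signs_add: "top_signs M D s E1 \<Longrightarrow> top_signs M D s E2 \<Longrightarrow> top_signs M D s (expoly_add E1 E2)"
  unfolding top_signs_def using deg_bounded_add by (auto simp: distrib_left)

lemma top_sign_strict_add_left:
  "top_sign_strict r D s E1 \<Longrightarrow> top_signs M D s E2 \<Longrightarrow> top_sign_strict r D s (expoly_add E1 E2)"
  unfolding top_signs_def top_sign_strict_def by (simp add: distrib_left add_pos_nonneg)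

lemma top_sign_strict_add_right:
  "top_signs M D s E1 \<Longrightarrow> top_sign_strict r D s E2 \<Longrightarrow> top_sign_strict r D s (expoly_add E1 E2)"
  unfolding top_signs_def top_sign_strict_def by (simp add: distrib_left add_nonneg_pos)

lemma top_signs_sum:
  "finite A \<Longrightarrow> (\<And>j. j \<in> A \<Longrightarrow> top_signs M D s (f j)) \<Longrightarrow> top_signs M D s (expoly_sum f A)"
  unfolding top_signs_def deg_bounded_def supported_def expoly_sum_def
  by (auto simp: coeff_sum sum_distrib_left intro!: sum_nonneg degree_sum_le)

lemma top_sign_strict_sum:
  assumes "finite A" "j0 \<in> A" "top_sign_strict r D s (f j0)" "\<And>j. j \<in> A \<Longrightarrow> top_signs M D s (f j)"
  shows "top_sign_strict r D s (expoly_sum f A)"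
proof -
  have "0 < (\<Sum>j\<in>A. s r * coeff (f j r) (D r))"
    by (rule sum_pos2[OF assms(1,2)]) (use assms(3,4) in \<open>auto simp: top_sign_strict_def top_signs_def\<close>)
  then show ?thesis by (simp add: top_sign_strict_def expoly_sum_def coeff_sum sum_distrib_left)
qed

lemma deg_bounded_smult: "deg_bounded M D E \<Longrightarrow> deg_bounded M D (expoly_smult c E)"
  unfolding deg_bounded_def using supported_smult by (auto intro: order_trans[OF degree_smult_le])

lemma top_signs_smult:
  assumes "top_signs M D s E" "0 \<le> c * c'"
  shows "top_signs M D (\<lambda>r. c' * s r) (expoly_smult c E)"
proof -
  have "0 \<le> (c * c') * (s r * coeff (E r) (D r))" for r
    by (rule mult_nonneg_nonneg) (use assms in \<open>auto simp: top_signs_def\<close>)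
  then show ?thesis
    using assms deg_bounded_smult by (auto simp: top_signs_def algebra_simps)
qed

lemma top_sign_strict_smult:
  assumes "top_sign_strict r D s E" "0 < c * c'"
  shows "top_sign_strict r D (\<lambda>r. c' * s r) (expoly_smult c E)"
proof -
  have "0 < (c * c') * (s r * coeff (E r) (D r))"
    by (rule mult_pos_pos) (use assms in \<open>auto simp: top_sign_strict_def\<close>)
  then show ?thesis by (simp add: top_sign_strict_def algebra_simps)
qed

text \<open>Both \<open>expoly_shift\<close> and \<open>expoly_shift_back\<close> are of the form treated next.\<close>
lemma coeff_smult_pcompose_shift:
  "degree p \<le> d \<Longrightarrow> coeff (smult c (pcompose p [:a, 1:])) d = c * coeff p d"
  for p :: "rat poly"
  by (simp add: coeff_pcompose_shift)

lemma deg_bounded_rescale_shift: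
  "deg_bounded M D E \<Longrightarrow> deg_bounded M D (\<lambda>r. smult (f r) (pcompose (E r) [:a r, 1:]))"
  unfolding deg_bounded_def supported_def
  by (auto simp: degree_pcompose_shift intro: order_trans[OF degree_smult_le])

lemma top_signs_rescale_shift:
  assumes "top_signs M D s E" "\<And>r. 0 \<le> f r"
  shows "top_signs M D s (\<lambda>r. smult (f r) (pcompose (E r) [:a r, 1:]))"
proof -
  have db: "deg_bounded M D E" using assms(1) by (rule top_signs_deg_bounded)
  have "0 \<le> s r * coeff (smult (f r) (pcompose (E r) [:a r, 1:])) (D r)" for r
  proof -
    have "s r * coeff (smult (f r) (pcompose (E r) [:a r, 1:])) (D r) = f r * (s r * coeff (E r) (D r))"
      by (simp add: coeff_pcompose_shift[OF deg_bounded_degree[OF db]] mult.left_commute)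
    also have "0 \<le> \<dots>" by (rule mult_nonneg_nonneg) (use assms in \<open>auto simp: top_signs_def\<close>)
    finally show ?thesis .
  qed
  then show ?thesis unfolding top_signs_def using deg_bounded_rescale_shift[OF db] by blast
qed

lemma top_sign_strict_rescale_shift:
  assumes "top_sign_strict r D s E" "deg_bounded M D E" "0 < f r"
  shows "top_sign_strict r D s (\<lambda>r. smult (f r) (pcompose (E r) [:a r, 1:]))"
proof -
  have "s r * coeff (smult (f r) (pcompose (E r) [:a r, 1:])) (D r) = f r * (s r * coeff (E r) (D r))"
    by (simp add: coeff_pcompose_shift[OF deg_bounded_degree[OF assms(2)]] mult.left_commute)
  also have "0 < \<dots>" by (rule mult_pos_pos) (use assms in \<open>auto simp: top_sign_strict_def\<close>)
  finally show ?thesis unfolding top_sign_strict_def .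
qed

lemma deg_bounded_shift: "deg_bounded M D E \<Longrightarrow> deg_bounded M D (expoly_shift c E)"
  unfolding expoly_shift_def by (rule deg_bounded_rescale_shift)

lemma top_signs_shift: "top_signs M D s E \<Longrightarrow> top_signs M D s (expoly_shift c E)"
  unfolding expoly_shift_def by (rule top_signs_rescale_shift) simp_all

lemma top_sign_strict_shift:
  "top_sign_strict r D s E \<Longrightarrow> deg_bounded M D E \<Longrightarrow> 1 \<le> r \<Longrightarrow> top_sign_strict r D s (expoly_shift c E)"
  unfolding expoly_shift_def by (rule top_sign_strict_rescale_shift) simp_all

lemma deg_bounded_shift_back: "deg_bounded M D E \<Longrightarrow> deg_bounded M D (expoly_shift_back E)"
  unfolding expoly_shift_back_def by (rule deg_bounded_rescale_shift)

lemma top_signs_shift_back: "top_signs M D s E \<Longrightarrow> top_signs M D s (expoly_shift_back E)"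
  unfolding expoly_shift_back_def by (rule top_signs_rescale_shift) simp_all

lemma top_sign_strict_shift_back:
  "top_sign_strict r D s E \<Longrightarrow> deg_bounded M D E \<Longrightarrow> 1 \<le> r \<Longrightarrow> top_sign_strict r D s (expoly_shift_back E)"
  unfolding expoly_shift_back_def by (rule top_sign_strict_rescale_shift) simp_all

lemma coeff_expoly_shift:
  "degree (E r) \<le> d \<Longrightarrow> coeff (expoly_shift c E r) d = of_nat r ^ c * coeff (E r) d"
  unfolding expoly_shift_def by (rule coeff_smult_pcompose_shift)

lemma degree_coeff_mult_n_minus_2:
  "degree (E r) \<le> d \<Longrightarrow>
     degree (expoly_mult_n_minus_2 E r) \<le> d + 1 \<and> coeff (expoly_mult_n_minus_2 E r) (d + 1) = coeff (E r) d"
  using degree_mult_le[of "E r" "[:-2, 1:]"] by (simp add: expoly_mult_n_minus_2_def coeff_eq_0)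

lemma deg_bounded_mult_n_minus_2:
  "deg_bounded M D E \<Longrightarrow> deg_bounded M (\<lambda>r. D r + 1) (expoly_mult_n_minus_2 E)"
  using supported_mult_n_minus_2 degree_coeff_mult_n_minus_2 by (auto simp: deg_bounded_def)

lemma top_signs_mult_n_minus_2:
  "top_signs M D s E \<Longrightarrow> top_signs M (\<lambda>r. D r + 1) s (expoly_mult_n_minus_2 E)"
  using deg_bounded_mult_n_minus_2 degree_coeff_mult_n_minus_2 by (auto simp: top_signs_def deg_bounded_def)

lemma top_sign_strict_mult_n_minus_2:
  "top_sign_strict r D s E \<Longrightarrow> deg_bounded M D E \<Longrightarrow>
     top_sign_strict r (\<lambda>r. D r + 1) s (expoly_mult_n_minus_2 E)"
  using degree_coeff_mult_n_minus_2 by (simp add: top_sign_strict_def deg_bounded_def)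

lemma top_signs_const: "1 \<le> M \<Longrightarrow> 0 < D 1 \<Longrightarrow> top_signs M D s (expoly_const c)"
  using supported_const[of M c]
  by (auto simp: top_signs_def deg_bounded_def expoly_const_def coeff_pCons split: nat.splits)

lemma deg_bounded_weaken:
  assumes "deg_bounded M D E" "M \<le> M'" "\<And>r. 1 \<le> r \<Longrightarrow> r \<le> M \<Longrightarrow> D r \<le> D' r"
  shows "deg_bounded M' D' E"
  unfolding deg_bounded_def
proof (intro conjI allI)
  show "supported M' E" using assms(1,2) supported_mono deg_bounded_supported by blast
  fix r show "degree (E r) \<le> D' r"
    using assms deg_bounded_degree[OF assms(1), of r] supported_zero[OF deg_bounded_supported[OF assms(1)], of r]
    by (cases "r = 0 \<or> M < r") (auto intro: order_trans)
qed

lemma top_signs_weaken: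
  assumes E: "top_signs M D s E" and "M \<le> M'"
    and D: "\<And>r. 1 \<le> r \<Longrightarrow> r \<le> M \<Longrightarrow> D r < D' r \<or> (D r = D' r \<and> s r = s' r)"
  shows "top_signs M' D' s' E"
proof -
  have db: "deg_bounded M D E" using E by (rule top_signs_deg_bounded)
  have "0 \<le> s' r * coeff (E r) (D' r)" for r
  proof (cases "r = 0 \<or> M < r")
    case True
    then show ?thesis using supported_zero[OF deg_bounded_supported[OF db]] by simp
  next
    case False
    then have "1 \<le> r" "r \<le> M" by auto
    then consider "D r < D' r" | "D r = D' r" "s r = s' r" using D by blast
    then show ?thesis
    proof cases
      case 1
      then show ?thesis using deg_bounded_degree[OF db, of r] by (simp add: coeff_eq_0)
    next
      case 2
      have "0 \<le> s r * coeff (E r) (D r)" using E by (simp add: top_signs_def)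
      then show ?thesis using 2 by simp
    qed
  qed
  moreover have "deg_bounded M' D' E"
    using db \<open>M \<le> M'\<close> by (rule deg_bounded_weaken) (use D in fastforce)
  ultimately show ?thesis by (simp add: top_signs_def)
qed

lemma top_signs_of_lower_degree:
  assumes "deg_bounded M D E" "M \<le> M'" "\<And>r. 1 \<le> r \<Longrightarrow> r \<le> M \<Longrightarrow> D r < D' r"
  shows "top_signs M' D' s E"
proof -
  have "top_signs M D (\<lambda>_. 0) E" using assms(1) by (simp add: top_signs_def)
  then show ?thesis by (rule top_signs_weaken[OF _ assms(2)]) (use assms(3) in blast)
qed

definition conv_compatible ::
  "nat \<Rightarrow> (nat \<Rightarrow> nat) \<Rightarrow> (nat \<Rightarrow> rat) \<Rightarrow> nat \<Rightarrow> (nat \<Rightarrow> nat) \<Rightarrow> (nat \<Rightarrow> rat) \<Rightarrow> (nat \<Rightarrow> nat) \<Rightarrow> (nat \<Rightarrow> rat) \<Rightarrow> bool"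
  where "conv_compatible M1 D1 s1 M2 D2 s2 D s \<longleftrightarrow>
    (\<forall>x y. 1 \<le> x \<longrightarrow> x \<le> M1 \<longrightarrow> 1 \<le> y \<longrightarrow> y \<le> M2 \<longrightarrow>
       D1 x + D2 y < D (x + y) \<or> D1 x + D2 y = D (x + y) \<and> s (x + y) = s1 x * s2 y)"

lemma conv_compatibleD:
  assumes "conv_compatible M1 D1 s1 M2 D2 s2 D s" "1 \<le> x" "x \<le> M1" "1 \<le> y" "y \<le> M2" "x + y = r"
  shows "D1 x + D2 y < D r \<or> D1 x + D2 y = D r \<and> s r = s1 x * s2 y"
  using assms unfolding conv_compatible_def by blast

text \<open>Contribution of the summand \<open>x\<close> of \<open>expoly_conv E\<^sub>1 E\<^sub>2 r\<close> to the coefficient of degree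
  \<open>D r\<close>.\<close>
definition conv_top_term ::
  "(nat \<Rightarrow> nat) \<Rightarrow> (nat \<Rightarrow> nat) \<Rightarrow> (nat \<Rightarrow> nat) \<Rightarrow> expoly \<Rightarrow> expoly \<Rightarrow> nat \<Rightarrow> nat \<Rightarrow> rat"
  where "conv_top_term D1 D2 D E1 E2 r x =
    (if D1 x + D2 (r - x) = D r then
       coeff (E1 x) (D1 x) * coeff (E2 (r - x)) (D2 (r - x))
         * of_nat x ^ D1 x * of_nat (r - x) ^ D2 (r - x) / of_nat r ^ D r
     else 0)"

lemma conv_summand_top:
  assumes E1: "deg_bounded M1 D1 E1" and E2: "deg_bounded M2 D2 E2"
    and c: "conv_compatible M1 D1 s1 M2 D2 s2 D s" and x: "x \<in> {1..<r}"
  defines "P \<equiv> binom_conv_poly (of_nat x) (of_nat (r - x)) (E1 x) (E2 (r - x))"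
  shows "degree P \<le> D r \<and> coeff P (D r) = conv_top_term D1 D2 D E1 E2 r x"
proof -
  have r: "(of_nat x + of_nat (r - x) :: rat) = of_nat r" "(of_nat r :: rat) \<noteq> 0"
    using x by (auto simp: of_nat_diff)
  show ?thesis
  proof (cases "E1 x = 0 \<or> E2 (r - x) = 0")
    case True
    then show ?thesis using r binom_conv_poly_zero[of "of_nat x" "of_nat (r - x)"]
      by (auto simp: P_def conv_top_term_def)
  next
    case False
    then have "x \<le> M1" "r - x \<le> M2"
      using supported_zero[OF deg_bounded_supported[OF E1]] supported_zero[OF deg_bounded_supported[OF E2]]
      by (meson not_le)+
    then have "D1 x + D2 (r - x) < D r \<or> D1 x + D2 (r - x) = D r \<and> s r = s1 x * s2 (r - x)"
      using x by (intro conv_compatibleD[OF c]) auto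
    then have le: "D1 x + D2 (r - x) \<le> D r" by linarith
    have P: "degree P \<le> D1 x + D2 (r - x)"
      "coeff P (D1 x + D2 (r - x)) = coeff (E1 x) (D1 x) * coeff (E2 (r - x)) (D2 (r - x))
         * of_nat x ^ D1 x * of_nat (r - x) ^ D2 (r - x) / of_nat r ^ (D1 x + D2 (r - x))"
      using binom_conv_poly_degree[of "of_nat x" "of_nat (r - x)" "E1 x" "D1 x" "E2 (r - x)" "D2 (r - x)"]
        r deg_bounded_degree[OF E1] deg_bounded_degree[OF E2] by (simp_all add: P_def)
    show ?thesis
    proof (cases "D1 x + D2 (r - x) = D r")
      case True
      then show ?thesis using P by (simp add: conv_top_term_def)
    next
      case False
      then show ?thesis using P le by (simp add: conv_top_term_def coeff_eq_0)
    qed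
  qed
qed

lemma coeff_expoly_conv:
  assumes "deg_bounded M1 D1 E1" "deg_bounded M2 D2 E2" "conv_compatible M1 D1 s1 M2 D2 s2 D s"
  shows "degree (expoly_conv E1 E2 r) \<le> D r"
    and "coeff (expoly_conv E1 E2 r) (D r) = (\<Sum>x\<in>{1..<r}. conv_top_term D1 D2 D E1 E2 r x)"
  using conv_summand_top[OF assms]
  by (auto simp: expoly_conv_def coeff_sum intro!: degree_sum_le sum.cong)

lemma deg_bounded_conv:
  assumes "deg_bounded M1 D1 E1" "deg_bounded M2 D2 E2" "conv_compatible M1 D1 s1 M2 D2 s2 D s"
  shows "deg_bounded (M1 + M2) D (expoly_conv E1 E2)"
  using coeff_expoly_conv(1)[OF assms] supported_conv assms(1,2)
  by (simp add: deg_bounded_def)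

lemma conv_top_term_sign:
  assumes E1: "top_signs M1 D1 s1 E1" and E2: "top_signs M2 D2 s2 E2"
    and c: "conv_compatible M1 D1 s1 M2 D2 s2 D s" and x: "x \<in> {1..<r}"
  shows "0 \<le> s r * conv_top_term D1 D2 D E1 E2 r x"
proof (cases "E1 x = 0 \<or> E2 (r - x) = 0 \<or> D1 x + D2 (r - x) \<noteq> D r")
  case True
  then show ?thesis by (auto simp: conv_top_term_def)
next
  case False
  then have "x \<le> M1" "r - x \<le> M2" and eq: "D1 x + D2 (r - x) = D r"
    using supported_zero[OF deg_bounded_supported[OF top_signs_deg_bounded[OF E1]]]
      supported_zero[OF deg_bounded_supported[OF top_signs_deg_bounded[OF E2]]]
    by (meson not_le)+
  then have "D1 x + D2 (r - x) < D r \<or> D1 x + D2 (r - x) = D r \<and> s r = s1 x * s2 (r - x)"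
    using x by (intro conv_compatibleD[OF c]) auto
  then have "s r = s1 x * s2 (r - x)" using eq by simp
  then have "s r * conv_top_term D1 D2 D E1 E2 r x
      = (s1 x * coeff (E1 x) (D1 x)) * (s2 (r - x) * coeff (E2 (r - x)) (D2 (r - x)))
        * (of_nat x ^ D1 x * of_nat (r - x) ^ D2 (r - x) / of_nat r ^ D r)"
    using eq by (simp add: conv_top_term_def)
  also have "0 \<le> \<dots>"
    by (rule mult_nonneg_nonneg[OF mult_nonneg_nonneg]) (use E1 E2 in \<open>auto simp: top_signs_def\<close>)
  finally show ?thesis .
qed

lemma top_signs_conv:
  assumes "top_signs M1 D1 s1 E1" "top_signs M2 D2 s2 E2" "conv_compatible M1 D1 s1 M2 D2 s2 D s"
  shows "top_signs (M1 + M2) D s (expoly_conv E1 E2)"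
proof -
  have db: "deg_bounded M1 D1 E1" "deg_bounded M2 D2 E2"
    using assms(1,2) by (simp_all add: top_signs_def)
  have "0 \<le> s r * coeff (expoly_conv E1 E2 r) (D r)" for r
    unfolding coeff_expoly_conv(2)[OF db assms(3)] sum_distrib_left
    by (intro sum_nonneg conv_top_term_sign[OF assms])
  then show ?thesis using deg_bounded_conv[OF db assms(3)] by (simp add: top_signs_def)
qed

lemma top_sign_strict_conv:
  assumes E1: "top_signs M1 D1 s1 E1" and E2: "top_signs M2 D2 s2 E2"
    and c: "conv_compatible M1 D1 s1 M2 D2 s2 D s"
    and x0: "1 \<le> x0" "top_sign_strict x0 D1 s1 E1"
    and y0: "1 \<le> y0" "top_sign_strict y0 D2 s2 E2"
    and eq: "D1 x0 + D2 y0 = D (x0 + y0)"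
  shows "top_sign_strict (x0 + y0) D s (expoly_conv E1 E2)"
proof -
  let ?r = "x0 + y0"
  have db: "deg_bounded M1 D1 E1" "deg_bounded M2 D2 E2"
    using E1 E2 by (simp_all add: top_signs_def)
  have "E1 x0 \<noteq> 0" "E2 y0 \<noteq> 0" using x0(2) y0(2) by (auto simp: top_sign_strict_def)
  then have "x0 \<le> M1" "y0 \<le> M2"
    using supported_zero[OF deg_bounded_supported[OF db(1)]] supported_zero[OF deg_bounded_supported[OF db(2)]]
    by (meson not_le)+
  then have "s ?r = s1 x0 * s2 y0" using conv_compatibleD[OF c x0(1) _ y0(1)] eq by fastforce
  then have "s ?r * conv_top_term D1 D2 D E1 E2 ?r x0
      = (s1 x0 * coeff (E1 x0) (D1 x0)) * (s2 y0 * coeff (E2 y0) (D2 y0))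
        * (of_nat x0 ^ D1 x0 * of_nat y0 ^ D2 y0 / of_nat ?r ^ D ?r)"
    using eq by (simp add: conv_top_term_def)
  also have "0 < \<dots>"
    by (rule mult_pos_pos[OF mult_pos_pos]) (use x0 y0 in \<open>auto simp: top_sign_strict_def\<close>)
  finally have "0 < s ?r * conv_top_term D1 D2 D E1 E2 ?r x0" .
  then have "0 < (\<Sum>x\<in>{1..<?r}. s ?r * conv_top_term D1 D2 D E1 E2 ?r x)"
    using x0(1) y0(1) conv_top_term_sign[OF E1 E2 c] by (intro sum_pos2[of _ x0]) auto
  then show ?thesis
    by (simp add: top_sign_strict_def coeff_expoly_conv(2)[OF db c] sum_distrib_left)
qed

lemma coeff_expoly_conv_top:
  assumes "deg_bounded M1 D1 E1" "deg_bounded M2 D2 E2" "conv_compatible M1 D1 s1 M2 D2 s2 D s"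
    and "1 \<le> M1" "1 \<le> M2" "D1 M1 + D2 M2 = D (M1 + M2)"
  shows "coeff (expoly_conv E1 E2 (M1 + M2)) (D (M1 + M2)) = coeff (E1 M1) (D1 M1) * coeff (E2 M2) (D2 M2)
          * of_nat M1 ^ D1 M1 * of_nat M2 ^ D2 M2 / of_nat (M1 + M2) ^ D (M1 + M2)"
proof -
  have "(\<Sum>x\<in>{1..<M1 + M2}. conv_top_term D1 D2 D E1 E2 (M1 + M2) x)
      = (\<Sum>x\<in>{M1}. conv_top_term D1 D2 D E1 E2 (M1 + M2) x)"
  proof (rule sum.mono_neutral_right)
    show "\<forall>x\<in>{1..<M1 + M2} - {M1}. conv_top_term D1 D2 D E1 E2 (M1 + M2) x = 0"
    proof
      fix x assume "x \<in> {1..<M1 + M2} - {M1}"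
      then have "M1 < x \<or> M2 < M1 + M2 - x" by auto
      then have "E1 x = 0 \<or> E2 (M1 + M2 - x) = 0"
        using supported_zero[OF deg_bounded_supported[OF assms(1)]]
          supported_zero[OF deg_bounded_supported[OF assms(2)]] by blast
      then show "conv_top_term D1 D2 D E1 E2 (M1 + M2) x = 0" by (auto simp: conv_top_term_def)
    qed
  qed (use assms(4,5) in auto)
  then show ?thesis using assms(6) by (simp add: coeff_expoly_conv(2)[OF assms(1-3)] conv_top_term_def)
qed

lemma top_signs_antidiff:
  assumes "top_signs M D s E"
  shows "top_signs M (\<lambda>r. if r = 1 then D r + 1 else D r) s (expoly_antidiff M D E)"
proof -
  have db: "deg_bounded M D E" using assms by (rule top_signs_deg_bounded)
  have "degree (expoly_antidiff M D E r) \<le> (if r = 1 then D r + 1 else D r) \<and>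
        0 \<le> s r * coeff (expoly_antidiff M D E r) (if r = 1 then D r + 1 else D r)" for r
  proof (cases "r = 0 \<or> M < r")
    case True
    then show ?thesis by (auto simp: expoly_antidiff_def)
  next
    case False
    then have Q: "is_antidiff r (D r) (E r) (expoly_antidiff M D E r)"
      using deg_bounded_degree[OF db] by (intro expoly_antidiff_is_antidiff) auto
    have s: "0 \<le> s r * coeff (E r) (D r)" using assms by (simp add: top_signs_def)
    show ?thesis
    proof (cases "r = 1")
      case True
      then show ?thesis using Q s by (simp add: is_antidiff_def)
    next
      case False
      then have "0 \<le> (s r * coeff (E r) (D r)) * (of_nat r / (of_nat r - 1))"
        using s \<open>\<not> (r = 0 \<or> M < r)\<close> by (intro mult_nonneg_nonneg[OF s]) auto
      then show ?thesis using Q False by (simp add: is_antidiff_def mult.assoc)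
    qed
  qed
  then show ?thesis using supported_antidiff by (simp add: top_signs_def deg_bounded_def)
qed

lemma top_sign_strict_antidiff:
  assumes db: "deg_bounded M D E" and E: "top_sign_strict r D s E" and r: "1 \<le> r" "r \<le> M"
  shows "top_sign_strict r (\<lambda>r. if r = 1 then D r + 1 else D r) s (expoly_antidiff M D E)"
proof -
  have Q: "is_antidiff r (D r) (E r) (expoly_antidiff M D E r)"
    using r deg_bounded_degree[OF db] by (intro expoly_antidiff_is_antidiff)
  have s: "0 < s r * coeff (E r) (D r)" using E by (simp add: top_sign_strict_def)
  show ?thesis
  proof (cases "r = 1")
    case True
    then show ?thesis using Q s by (simp add: is_antidiff_def top_sign_strict_def)
  next
    case False
    then have "0 < (s r * coeff (E r) (D r)) * (of_nat r / (of_nat r - 1))"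
      using r by (intro mult_pos_pos[OF s]) auto
    then show ?thesis using Q False by (simp add: is_antidiff_def top_sign_strict_def mult.assoc)
  qed
qed

lemma coeff_expoly_antidiff:
  assumes "deg_bounded M D E" "2 \<le> r" "r \<le> M"
  shows "coeff (expoly_antidiff M D E r) (D r) = coeff (E r) (D r) * of_nat r / (of_nat r - 1)"
  using expoly_antidiff_is_antidiff[of r M E D] deg_bounded_degree[OF assms(1)] assms(2,3)
  by (simp add: is_antidiff_def)

section \<open>The Betti numbers\<close>

declare poincare_M0.simps [simp del]

lemma coeff_mult_one_plus_X:
  "coeff ((p :: nat poly) * [:1, 1:]) k = coeff p k + (if k = 0 then 0 else coeff p (k - 1))"
  by (cases k) (simp_all add: coeff_pCons)

lemma rk_H_recursion:
  assumes "4 \<le> n" "1 \<le> k"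
  shows "rk_H n k = rk_H (n - 1) k + rk_H (n - 1) (k - 1) +
     (\<Sum>i\<in>{3..n-2}. ((n - 2) choose (i - 1)) * (\<Sum>j\<le>k-1. rk_H i j * rk_H (n + 1 - i) (k - 1 - j)))"
proof -
  have "poincare_M0 n = poincare_M0 (n - 1) * [:1, 1:]
           + monom 1 1 * (\<Sum>i\<in>{3..n-2}. smult ((n - 2) choose (i - 1))
                 (poincare_M0 i * poincare_M0 (n + 1 - i)))"
    using assms(1) by (subst poincare_M0.simps) simp
  then have "coeff (poincare_M0 n) k = coeff (poincare_M0 (n - 1)) k + coeff (poincare_M0 (n - 1)) (k - 1)
     + (\<Sum>i\<in>{3..n-2}. ((n - 2) choose (i - 1)) * coeff (poincare_M0 i * poincare_M0 (n + 1 - i)) (k - 1))"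
    using assms(2) coeff_mult_one_plus_X
    by (simp add: coeff_monom_mult coeff_sum del: mult_pCons_right)
  then show ?thesis unfolding rk_H_def by (simp add: coeff_mult)
qed

lemma rk_H_0: "3 \<le> n \<Longrightarrow> rk_H n 0 = 1"
proof (induction n rule: less_induct)
  case (less n)
  show ?case
  proof (cases "n = 3")
    case True
    then show ?thesis by (simp add: rk_H_def poincare_M0.simps)
  next
    case False
    then have n: "4 \<le> n" using less.prems by simp
    then have "coeff (poincare_M0 n) 0 = coeff (poincare_M0 (n - 1)) 0"
      using coeff_mult_one_plus_X
      by (subst poincare_M0.simps) (simp add: coeff_monom_mult del: mult_pCons_right)
    then show ?thesis using less n by (simp add: rk_H_def)
  qed
qed

definition betti_lead :: "nat \<Rightarrow> rat" where
  "betti_lead k = of_nat ((k + 1) ^ (k - 1)) / of_nat (fact (k + 1))"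

lemma fact_Suc_rat: "(fact (j + 1) :: rat) = of_nat (j + 1) * fact j"
  by (simp add: fact_Suc)

lemma betti_lead_times_Suc: "betti_lead j * of_nat (j + 1) = (1 + of_nat j)^(j - 1) / fact j"
proof -
  have "betti_lead j * of_nat (j + 1) = of_nat (j + 1)^(j - 1) / (of_nat (j + 1) * fact j) * of_nat (j + 1)"
    by (simp only: betti_lead_def of_nat_power of_nat_fact fact_Suc_rat)
  also have "\<dots> = of_nat (j + 1)^(j - 1) / fact j"
    by (simp del: of_nat_add of_nat_Suc)
  finally show ?thesis by simp
qed

lemma betti_lead_times_Suc_square: "betti_lead j * of_nat (j + 1)^2 = (1 + of_nat j)^j / fact j"
proof -
  have "betti_lead j * of_nat (j + 1)^2
      = of_nat (j + 1)^(j - 1) / (of_nat (j + 1) * fact j) * of_nat (j + 1) * of_nat (j + 1)"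
    by (simp only: betti_lead_def of_nat_power of_nat_fact fact_Suc_rat power2_eq_square mult.assoc)
  also have "\<dots> = of_nat (j + 1)^(j - 1) * of_nat (j + 1) / fact j"
    by (simp del: of_nat_add of_nat_Suc)
  also have "of_nat (j + 1)^(j - 1) * of_nat (j + 1) = (of_nat (j + 1) :: rat)^j"
    by (cases j) simp_all
  finally show ?thesis by simp
qed

lemma betti_lead_Suc:
  "of_nat (Suc n) * of_nat (Suc n + 1) * betti_lead (Suc n) = of_nat (Suc n + 1)^n / fact n"
proof -
  have cancel: "v * u * (a / (u * (v * f))) = a / f" if "u \<noteq> 0" "v \<noteq> 0" for a u v f :: rat
    using that by (cases "f = 0") (simp_all add: field_simps)
  have "(fact (Suc n + 1) :: rat) = of_nat (Suc n + 1) * (of_nat (Suc n) * fact n)"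
    by (simp only: fact_Suc_rat fact_Suc)
  then have "of_nat (Suc n) * of_nat (Suc n + 1) * betti_lead (Suc n)
      = of_nat (Suc n) * of_nat (Suc n + 1) * (of_nat (Suc n + 1)^n / (of_nat (Suc n + 1) * (of_nat (Suc n) * fact n)))"
    by (simp only: betti_lead_def of_nat_power of_nat_fact diff_Suc_1)
  also have "\<dots> = of_nat (Suc n + 1)^n / fact n" by (rule cancel) simp_all
  finally show ?thesis .
qed

text \<open>Abel's identity in disguise.\<close>
lemma betti_lead_recursion:
  "(\<Sum>j<Suc n. betti_lead j * betti_lead (n - j) * of_nat (j + 1) * of_nat (Suc n - j)^2)
     = of_nat (Suc n) * of_nat (Suc n + 1) * betti_lead (Suc n)"
proof -
  have "(\<Sum>j<Suc n. betti_lead j * betti_lead (n - j) * of_nat (j + 1) * of_nat (Suc n - j)^2)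
      = (\<Sum>j\<le>n. of_nat (n choose j) * (1 + of_nat j)^(j - 1) * (of_nat (Suc n) - of_nat j)^(n - j)) / fact n"
    unfolding sum_divide_distrib lessThan_Suc_atMost
  proof (intro sum.cong refl)
    fix j assume "j \<in> {..n}"
    then have jn: "j \<le> n" by simp
    have "Suc n - j = (n - j) + 1" "(of_nat (n - j) :: rat) = of_nat n - of_nat j"
      using jn by (simp_all add: of_nat_diff)
    then have b: "betti_lead (n - j) * of_nat (Suc n - j)^2 = (of_nat (Suc n) - of_nat j)^(n - j) / fact (n - j)"
      using betti_lead_times_Suc_square[of "n - j"] by (simp add: add_diff_eq)
    have "betti_lead j * betti_lead (n - j) * of_nat (j + 1) * of_nat (Suc n - j)^2
        = (1 + of_nat j)^(j - 1) / fact j * ((of_nat (Suc n) - of_nat j)^(n - j) / fact (n - j))"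
      by (simp only: betti_lead_times_Suc[symmetric] b[symmetric] mult_ac)
    also have "\<dots> = of_nat (n choose j) * (1 + of_nat j)^(j - 1) * (of_nat (Suc n) - of_nat j)^(n - j) / fact n"
      using binomial_fact[OF jn, where 'a=rat] by (simp add: field_simps)
    finally show "betti_lead j * betti_lead (n - j) * of_nat (j + 1) * of_nat (Suc n - j)^2
        = of_nat (n choose j) * (1 + of_nat j)^(j - 1) * (of_nat (Suc n) - of_nat j)^(n - j) / fact n" .
  qed
  also have "\<dots> = (1 + of_nat (Suc n))^n / fact n" by (simp only: abel_identity)
  also have "\<dots> = of_nat (Suc n) * of_nat (Suc n + 1) * betti_lead (Suc n)"
    using betti_lead_Suc[of n] by simp
  finally show ?thesis .
qed

definition betti_deg :: "nat \<Rightarrow> nat \<Rightarrow> nat" where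
  "betti_deg k r = 2 * (k + 1 - r)"

definition betti_sign :: "nat \<Rightarrow> nat \<Rightarrow> rat" where
  "betti_sign k r = (-1) ^ (k + 1 - r)"

text \<open>Degree bounds for the first difference \<open>rk_H n k - rk_H (n - 1) k\<close>; antidifferencing
  raises the bound at \<open>r = 1\<close> by one, which gives back \<open>betti_deg k\<close>.\<close>
definition diff_deg :: "nat \<Rightarrow> nat \<Rightarrow> nat" where
  "diff_deg k r = (if r = 1 then 2 * k - 1 else 2 * (k + 1 - r))"

definition betti_expoly :: "nat \<Rightarrow> expoly \<Rightarrow> bool" where
  "betti_expoly k E \<longleftrightarrow> top_signs (k + 1) (betti_deg k) (betti_sign k) E \<and>
     (\<forall>r. 1 \<le> r \<longrightarrow> r \<le> k + 1 \<longrightarrow> top_sign_strict r (betti_deg k) (betti_sign k) E) \<and>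
     coeff (E (k + 1)) 0 = betti_lead k \<and>
     (\<forall>n\<ge>3. of_nat (rk_H n k) = expoly_val (k + 1) E n)"

lemma betti_expoly_top_signs: "betti_expoly k E \<Longrightarrow> top_signs (k + 1) (betti_deg k) (betti_sign k) E"
  by (simp add: betti_expoly_def)

lemma betti_expoly_deg_bounded: "betti_expoly k E \<Longrightarrow> deg_bounded (k + 1) (betti_deg k) E"
  by (simp add: betti_expoly_def top_signs_def)

lemma betti_expoly_supported: "betti_expoly k E \<Longrightarrow> supported (k + 1) E"
  by (simp add: betti_expoly_def top_signs_def deg_bounded_def)

lemma betti_expoly_strict:
  "betti_expoly k E \<Longrightarrow> 1 \<le> r \<Longrightarrow> r \<le> k + 1 \<Longrightarrow> top_sign_strict r (betti_deg k) (betti_sign k) E"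
  by (simp add: betti_expoly_def)

lemma betti_expoly_val: "betti_expoly k E \<Longrightarrow> 3 \<le> n \<Longrightarrow> of_nat (rk_H n k) = expoly_val (k + 1) E n"
  by (simp add: betti_expoly_def)

lemma betti_expoly_top:
  assumes E: "betti_expoly k E"
  shows "E (k + 1) = [:betti_lead k:]"
proof -
  have "degree (E (k + 1)) = 0"
    using deg_bounded_degree[OF betti_expoly_deg_bounded[OF E], of "k + 1"] by (simp add: betti_deg_def)
  then have "E (k + 1) = [:coeff (E (k + 1)) 0:]" by (rule degree_0_id[symmetric])
  also have "coeff (E (k + 1)) 0 = betti_lead k" using E by (simp add: betti_expoly_def)
  finally show ?thesis .
qed

lemma betti_expoly_0: "betti_expoly 0 (expoly_const 1)"
  using rk_H_0 expoly_val_const[of 1 1]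
  by (auto simp: betti_expoly_def top_signs_def deg_bounded_def supported_def top_sign_strict_def
      expoly_const_def betti_deg_def betti_sign_def betti_lead_def le_Suc_eq)

lemma betti_expoly_0_val: "betti_expoly 0 E \<Longrightarrow> expoly_val 1 E n = 1"
  using betti_expoly_top[of 0 E] supported_zero[OF betti_expoly_supported, of 0 E 0]
  by (simp add: expoly_val_def betti_lead_def one_pCons)

lemma eq_plus_const_if_diff_eq:
  fixes f g :: "nat \<Rightarrow> rat"
  assumes "\<And>n. m < n \<Longrightarrow> f n - f (n - 1) = g n - g (n - 1)" "m \<le> n"
  shows "f n = g n + (f m - g m)"
  using assms(2)
proof (induction n rule: dec_induct)
  case (step n)
  then show ?case using assms(1)[of "Suc n"] by simp
qed simp

text \<open>Summing up the first differences: an antidifference of \<open>R\<close> plus a constant at \<open>r = 1\<close>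
  fitted to the value at \<open>n = 3\<close>.\<close>
lemma betti_expoly_of_diff:
  assumes k: "1 \<le> k"
    and R: "top_signs (k + 1) (diff_deg k) (betti_sign k) R"
    and R_strict: "\<And>r. 1 \<le> r \<Longrightarrow> r \<le> k + 1 \<Longrightarrow> top_sign_strict r (diff_deg k) (betti_sign k) R"
    and R_top: "coeff (R (k + 1)) 0 * of_nat (k + 1) / of_nat k = betti_lead k"
    and R_val: "\<And>n. 4 \<le> n \<Longrightarrow> of_nat (rk_H n k) - of_nat (rk_H (n - 1) k) = expoly_val (k + 1) R n"
  shows "\<exists>E. betti_expoly k E"
proof -
  define A where "A = expoly_antidiff (k + 1) (diff_deg k) R"
  define C where "C = of_nat (rk_H 3 k) - expoly_val (k + 1) A 3"
  define E where "E = expoly_add A (expoly_const C)"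
  have R_deg: "deg_bounded (k + 1) (diff_deg k) R" using R by (rule top_signs_deg_bounded)
  have deg: "(\<lambda>r. if r = 1 then diff_deg k r + 1 else diff_deg k r) = betti_deg k"
    using k by (auto simp: diff_deg_def betti_deg_def)
  have C: "top_signs (k + 1) (betti_deg k) (betti_sign k) (expoly_const C)"
    using k by (intro top_signs_const) (simp_all add: betti_deg_def)
  have "top_signs (k + 1) (betti_deg k) (betti_sign k) E"
    unfolding E_def A_def by (rule top_signs_add[OF top_signs_antidiff[OF R, unfolded deg] C])
  moreover have "top_sign_strict r (betti_deg k) (betti_sign k) E" if "1 \<le> r" "r \<le> k + 1" for r
    unfolding E_def A_def
    using top_sign_strict_antidiff[OF R_deg R_strict[OF that] that, unfolded deg]
    by (rule top_sign_strict_add_left[OF _ C])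
  moreover have "coeff (E (k + 1)) 0 = betti_lead k"
  proof -
    have "coeff (A (k + 1)) (diff_deg k (k + 1)) = coeff (R (k + 1)) (diff_deg k (k + 1)) * of_nat (k + 1) / (of_nat (k + 1) - 1)"
      unfolding A_def by (rule coeff_expoly_antidiff[OF R_deg]) (use k in auto)
    then show ?thesis using R_top k by (simp add: E_def expoly_const_def diff_deg_def)
  qed
  moreover have "of_nat (rk_H n k) = expoly_val (k + 1) E n" if "3 \<le> n" for n
  proof -
    have "of_nat (rk_H n k) - of_nat (rk_H (n - 1) k) = expoly_val (k + 1) A n - expoly_val (k + 1) A (n - 1)"
      if "3 < n" for n
      using R_val[of n] expoly_val_antidiff[of "k + 1" R "diff_deg k" n] R_deg that
      by (simp add: A_def deg_bounded_def)
    from eq_plus_const_if_diff_eq[of 3 "\<lambda>n. of_nat (rk_H n k)", OF this \<open>3 \<le> n\<close>] show ?thesis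
      by (simp add: E_def C_def expoly_val_add expoly_val_const)
  qed
  ultimately show ?thesis unfolding betti_expoly_def by blast
qed

text \<open>Write \<open>V = rk_H \<cdot> j\<close> and \<open>W = rk_H \<cdot> (k - 1 - j)\<close>.  The sum over \<open>i = 3, \<dots>, n - 2\<close> in
  the recursion is the full binomial convolution \<open>\<Sum>s \<le> n - 2. C(n - 2, s) V(s + 1) W(n - s)\<close>
  (\<open>conv_full\<close>) minus its terms \<open>s = 0, 1, n - 2\<close>, in which the exponential polynomials of
  \<open>V\<close> and \<open>W\<close> are evaluated at \<open>1\<close> or \<open>2\<close>.\<close>
definition conv_full :: "nat \<Rightarrow> (nat \<Rightarrow> expoly) \<Rightarrow> nat \<Rightarrow> expoly" where
  "conv_full k EE j = expoly_shift_back (expoly_shift_back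
     (expoly_conv (expoly_shift 1 (EE j)) (expoly_shift 2 (EE (k - 1 - j)))))"

definition conv_boundary0 :: "nat \<Rightarrow> (nat \<Rightarrow> expoly) \<Rightarrow> nat \<Rightarrow> expoly" where
  "conv_boundary0 k EE j = expoly_smult (- expoly_val (j + 1) (EE j) 1) (EE (k - 1 - j))"

definition conv_boundary1 :: "nat \<Rightarrow> (nat \<Rightarrow> expoly) \<Rightarrow> nat \<Rightarrow> expoly" where
  "conv_boundary1 k EE j = expoly_smult (- expoly_val (j + 1) (EE j) 2)
     (expoly_mult_n_minus_2 (expoly_shift_back (EE (k - 1 - j))))"

definition conv_boundary_last :: "nat \<Rightarrow> (nat \<Rightarrow> expoly) \<Rightarrow> nat \<Rightarrow> expoly" where
  "conv_boundary_last k EE j = expoly_smult (- expoly_val (k - j) (EE (k - 1 - j)) 2) (expoly_shift_back (EE j))"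

definition conv_inner :: "nat \<Rightarrow> (nat \<Rightarrow> expoly) \<Rightarrow> nat \<Rightarrow> expoly" where
  "conv_inner k EE j = expoly_add (conv_full k EE j)
     (expoly_add (conv_boundary0 k EE j) (expoly_add (conv_boundary1 k EE j) (conv_boundary_last k EE j)))"

definition betti_diff :: "nat \<Rightarrow> (nat \<Rightarrow> expoly) \<Rightarrow> expoly" where
  "betti_diff k EE = expoly_add (expoly_shift_back (EE (k - 1))) (expoly_sum (conv_inner k EE) {..<k})"

lemma betti_deg_add:
  "j < k \<Longrightarrow> 1 \<le> x \<Longrightarrow> x \<le> j + 1 \<Longrightarrow> 1 \<le> y \<Longrightarrow> y \<le> k - j \<Longrightarrow>
     betti_deg j x + betti_deg (k - 1 - j) y = diff_deg k (x + y)"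
  by (auto simp: betti_deg_def diff_deg_def)

lemma betti_sign_add:
  "j < k \<Longrightarrow> 1 \<le> x \<Longrightarrow> x \<le> j + 1 \<Longrightarrow> 1 \<le> y \<Longrightarrow> y \<le> k - j \<Longrightarrow>
     betti_sign k (x + y) = betti_sign j x * betti_sign (k - 1 - j) y"
proof -
  assume "j < k" "1 \<le> x" "x \<le> j + 1" "1 \<le> y" "y \<le> k - j"
  then have "k + 1 - (x + y) = (j + 1 - x) + (k - 1 - j + 1 - y)" by auto
  then show ?thesis unfolding betti_sign_def by (simp add: power_add)
qed

lemma conv_compatible_betti:
  "j < k \<Longrightarrow> conv_compatible (j + 1) (betti_deg j) (betti_sign j) (k - j) (betti_deg (k - 1 - j))
     (betti_sign (k - 1 - j)) (diff_deg k) (betti_sign k)"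
  unfolding conv_compatible_def using betti_deg_add betti_sign_add by simp

lemma sum_choose_interior:
  fixes V W :: "nat \<Rightarrow> rat"
  assumes "2 \<le> N"
  shows "(\<Sum>i\<in>{3..N}. of_nat (N choose (i - 1)) * (V i * W (N + 3 - i)))
    = (\<Sum>s\<le>N. of_nat (N choose s) * V (s + 1) * W (N - s + 2))
      - V 1 * W (N + 2) - of_nat N * V 2 * W (N + 1) - V (N + 1) * W 2"
proof -
  define f where "f s = of_nat (N choose s) * V (s + 1) * W (N - s + 2)" for s
  have "{3..N} = {2 + 1..(N - 1) + 1}" using assms by simp
  then have "(\<Sum>i\<in>{3..N}. of_nat (N choose (i - 1)) * (V i * W (N + 3 - i))) = (\<Sum>s\<in>{2..N-1}. f s)"
    by (simp only: sum.shift_bounds_cl_nat_ivl) (rule sum.cong, auto simp: f_def Suc_diff_le)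
  also have "\<dots> = (\<Sum>s\<le>N. f s) - f 0 - f 1 - f N"
  proof -
    have "{..N} = insert 0 (insert 1 (insert N {2..N-1}))" using assms by auto
    then show ?thesis using assms by (simp add: algebra_simps)
  qed
  finally show ?thesis using assms by (simp add: f_def numeral_2_eq_2)
qed

context
  fixes k :: nat and EE :: "nat \<Rightarrow> expoly"
  assumes k: "1 \<le> k" and IH: "\<And>j. j < k \<Longrightarrow> betti_expoly j (EE j)"
begin

lemma betti_expoly_compl: "j < k \<Longrightarrow> betti_expoly (k - 1 - j) (EE (k - 1 - j))"
  using IH by simp

lemma top_signs_compl:
  "j < k \<Longrightarrow> top_signs (k - j) (betti_deg (k - 1 - j)) (betti_sign (k - 1 - j)) (EE (k - 1 - j))"
  using betti_expoly_top_signs[OF betti_expoly_compl] by (simp add: Suc_diff_Suc)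

lemma supported_compl: "j < k \<Longrightarrow> supported (k - j) (EE (k - 1 - j))"
  using top_signs_compl by (simp add: top_signs_def deg_bounded_def)

lemma top_signs_conv_full: "j < k \<Longrightarrow> top_signs (k + 1) (diff_deg k) (betti_sign k) (conv_full k EE j)"
  using top_signs_conv[OF top_signs_shift[OF betti_expoly_top_signs[OF IH]]
      top_signs_shift[OF top_signs_compl] conv_compatible_betti]
  by (simp add: conv_full_def top_signs_shift_back)

lemma top_signs_conv_boundary0:
  "j < k \<Longrightarrow> top_signs (k + 1) (diff_deg k) (betti_sign k) (conv_boundary0 k EE j)"
  unfolding conv_boundary0_def
  by (rule top_signs_of_lower_degree[OF deg_bounded_smult[OF top_signs_deg_bounded[OF top_signs_compl]]])
    (auto simp: betti_deg_def diff_deg_def)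

lemma top_signs_conv_boundary_last:
  "j < k \<Longrightarrow> top_signs (k + 1) (diff_deg k) (betti_sign k) (conv_boundary_last k EE j)"
  unfolding conv_boundary_last_def
  by (rule top_signs_of_lower_degree[OF deg_bounded_smult[OF deg_bounded_shift_back[OF
      betti_expoly_deg_bounded[OF IH]]]]) (auto simp: betti_deg_def diff_deg_def)

text \<open>For \<open>j > 0\<close> the degrees are too low to matter; for \<open>j = 0\<close> the factor \<open>n - 2\<close> makes
  the degree at \<open>r = 1\<close> reach \<open>2 k - 1\<close>, with the sign \<open>-(-1)\<^sup>k\<^sup>-\<^sup>1\<close>, because the exponential
  polynomial of \<open>V = rk_H \<cdot> 0\<close> is the constant \<open>1\<close>.\<close>
lemma top_signs_conv_boundary1:
  assumes "j < k"
  shows "top_signs (k + 1) (diff_deg k) (betti_sign k) (conv_boundary1 k EE j)"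
proof (cases "j = 0")
  case True
  have "top_signs k (\<lambda>r. betti_deg (k - 1) r + 1) (\<lambda>r. - 1 * betti_sign (k - 1) r)
      (expoly_smult (-1) (expoly_mult_n_minus_2 (expoly_shift_back (EE (k - 1)))))"
    using top_signs_compl[OF assms] True
    by (intro top_signs_smult top_signs_mult_n_minus_2 top_signs_shift_back) simp_all
  moreover have "expoly_val 1 (EE 0) 2 = 1" using betti_expoly_0_val IH k by simp
  ultimately have "top_signs k (\<lambda>r. betti_deg (k - 1) r + 1) (\<lambda>r. - betti_sign (k - 1) r) (conv_boundary1 k EE j)"
    by (simp add: conv_boundary1_def True)
  then show ?thesis
  proof (rule top_signs_weaken)
    fix r assume "1 \<le> r" "r \<le> k"
    then show "betti_deg (k - 1) r + 1 < diff_deg k r \<or>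
        betti_deg (k - 1) r + 1 = diff_deg k r \<and> - betti_sign (k - 1) r = betti_sign k r"
      using k by (cases k; cases "r = 1") (auto simp: betti_deg_def diff_deg_def betti_sign_def)
  qed simp
next
  case False
  have "deg_bounded (k - j) (\<lambda>r. betti_deg (k - 1 - j) r + 1) (conv_boundary1 k EE j)"
    unfolding conv_boundary1_def using top_signs_deg_bounded[OF top_signs_compl[OF assms]]
    by (intro deg_bounded_smult deg_bounded_mult_n_minus_2 deg_bounded_shift_back)
  then show ?thesis
    by (rule top_signs_of_lower_degree) (use False in \<open>auto simp: betti_deg_def diff_deg_def\<close>)
qed

lemma top_signs_conv_inner: "j < k \<Longrightarrow> top_signs (k + 1) (diff_deg k) (betti_sign k) (conv_inner k EE j)"
  unfolding conv_inner_def
  by (intro top_signs_add top_signs_conv_full top_signs_conv_boundary0 top_signs_conv_boundary1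
      top_signs_conv_boundary_last)

lemma top_signs_shift_back_last:
  "top_signs (k + 1) (diff_deg k) (betti_sign k) (expoly_shift_back (EE (k - 1)))"
  using top_signs_deg_bounded[OF top_signs_compl[of 0]] k
  by (intro top_signs_of_lower_degree[OF deg_bounded_shift_back])
    (auto simp: betti_deg_def diff_deg_def)

lemma top_signs_betti_diff: "top_signs (k + 1) (diff_deg k) (betti_sign k) (betti_diff k EE)"
  unfolding betti_diff_def
  by (intro top_signs_add top_signs_shift_back_last top_signs_sum top_signs_conv_inner) auto

lemma top_sign_strict_conv_full_0:
  assumes r: "2 \<le> r" "r \<le> k + 1"
  shows "top_sign_strict r (diff_deg k) (betti_sign k) (conv_full k EE 0)"
proof -
  have E0: "betti_expoly 0 (EE 0)" and El: "betti_expoly (k - 1) (EE (k - 1))" using IH k by simp_all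
  let ?C = "expoly_conv (expoly_shift 1 (EE 0)) (expoly_shift 2 (EE (k - 1)))"
  have signs1: "top_signs 1 (betti_deg 0) (betti_sign 0) (expoly_shift 1 (EE 0))"
    using top_signs_shift[OF betti_expoly_top_signs[OF E0]] by simp
  have signs2: "top_signs k (betti_deg (k - 1)) (betti_sign (k - 1)) (expoly_shift 2 (EE (k - 1)))"
    using top_signs_shift[OF top_signs_compl[of 0]] k by simp
  have compat: "conv_compatible 1 (betti_deg 0) (betti_sign 0) k (betti_deg (k - 1))
      (betti_sign (k - 1)) (diff_deg k) (betti_sign k)"
    using conv_compatible_betti[of 0 k] k by simp
  have "top_sign_strict (1 + (r - 1)) (diff_deg k) (betti_sign k) ?C"
  proof (rule top_sign_strict_conv[OF signs1 signs2 compat])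
    show "top_sign_strict 1 (betti_deg 0) (betti_sign 0) (expoly_shift 1 (EE 0))"
      using betti_expoly_strict[OF E0] betti_expoly_deg_bounded[OF E0] by (intro top_sign_strict_shift) auto
    show "top_sign_strict (r - 1) (betti_deg (k - 1)) (betti_sign (k - 1)) (expoly_shift 2 (EE (k - 1)))"
      using betti_expoly_strict[OF El] betti_expoly_deg_bounded[OF El] r k
      by (intro top_sign_strict_shift) auto
    show "betti_deg 0 1 + betti_deg (k - 1) (r - 1) = diff_deg k (1 + (r - 1))"
      using betti_deg_add[of 0 k 1 "r - 1"] r k by simp
  qed (use r in auto)
  moreover have "deg_bounded (k + 1) (diff_deg k) ?C"
    using top_signs_deg_bounded[OF top_signs_conv[OF signs1 signs2 compat]] by simp
  ultimately show ?thesis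
    using r unfolding conv_full_def
    by (intro top_sign_strict_shift_back deg_bounded_shift_back) auto
qed

lemma top_sign_strict_conv_boundary1_0: "top_sign_strict 1 (diff_deg k) (betti_sign k) (conv_boundary1 k EE 0)"
proof -
  have El: "betti_expoly (k - 1) (EE (k - 1))" using IH k by simp
  have db: "deg_bounded k (betti_deg (k - 1)) (EE (k - 1))"
    using top_signs_deg_bounded[OF top_signs_compl[of 0]] k by simp
  have "top_sign_strict 1 (\<lambda>r. betti_deg (k - 1) r + 1) (\<lambda>r. - 1 * betti_sign (k - 1) r)
      (expoly_smult (-1) (expoly_mult_n_minus_2 (expoly_shift_back (EE (k - 1)))))"
    using betti_expoly_strict[OF El, of 1] k
    by (intro top_sign_strict_smult top_sign_strict_mult_n_minus_2[OF _ deg_bounded_shift_back[OF db]]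
        top_sign_strict_shift_back[OF _ db]) auto
  moreover have "expoly_val 1 (EE 0) 2 = 1" using betti_expoly_0_val IH k by simp
  ultimately show ?thesis
    using k by (cases k) (auto simp: conv_boundary1_def top_sign_strict_def betti_deg_def diff_deg_def betti_sign_def)
qed

lemma top_sign_strict_conv_inner_0:
  assumes "1 \<le> r" "r \<le> k + 1"
  shows "top_sign_strict r (diff_deg k) (betti_sign k) (conv_inner k EE 0)"
proof (cases "r = 1")
  case True
  have "top_sign_strict r (diff_deg k) (betti_sign k)
      (expoly_add (conv_boundary0 k EE 0) (expoly_add (conv_boundary1 k EE 0) (conv_boundary_last k EE 0)))"
    unfolding True using k
    by (intro top_sign_strict_add_right[OF top_signs_conv_boundary0] top_sign_strict_add_left[OF
        top_sign_strict_conv_boundary1_0 top_signs_conv_boundary_last]) auto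
  then show ?thesis unfolding conv_inner_def using k by (intro top_sign_strict_add_right[OF top_signs_conv_full]) auto
next
  case False
  then show ?thesis unfolding conv_inner_def using assms k
    by (intro top_sign_strict_add_left[OF top_sign_strict_conv_full_0, where M = "k + 1"]
        top_signs_add top_signs_conv_boundary0 top_signs_conv_boundary1 top_signs_conv_boundary_last) auto
qed

lemma top_sign_strict_betti_diff:
  "1 \<le> r \<Longrightarrow> r \<le> k + 1 \<Longrightarrow> top_sign_strict r (diff_deg k) (betti_sign k) (betti_diff k EE)"
  unfolding betti_diff_def using k
  by (intro top_sign_strict_add_right[OF top_signs_shift_back_last] top_sign_strict_sum[of _ 0 _ _ _ _ "k + 1"]
      top_sign_strict_conv_inner_0 top_signs_conv_inner) auto

lemma coeff_conv_full_top:
  assumes j: "j < k"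
  shows "coeff (conv_full k EE j (k + 1)) 0 =
    betti_lead j * betti_lead (k - 1 - j) * of_nat (j + 1) * of_nat (k - j)^2 / of_nat (k + 1)^2"
proof -
  let ?l = "k - 1 - j"
  let ?C = "expoly_conv (expoly_shift 1 (EE j)) (expoly_shift 2 (EE ?l))"
  have Ej: "betti_expoly j (EE j)" and El: "betti_expoly ?l (EE ?l)" using IH j by simp_all
  have db1: "deg_bounded (j + 1) (betti_deg j) (expoly_shift 1 (EE j))"
    using deg_bounded_shift[OF betti_expoly_deg_bounded[OF Ej]] .
  have db2: "deg_bounded (k - j) (betti_deg ?l) (expoly_shift 2 (EE ?l))"
    using deg_bounded_shift[OF top_signs_deg_bounded[OF top_signs_compl[OF j]]] .
  have jk: "j + 1 + (k - j) = k + 1" "k - j = ?l + 1" using j by simp_all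
  have deg0: "betti_deg j (j + 1) = 0" "betti_deg ?l (k - j) = 0" "diff_deg k (k + 1) = 0"
    using j by (simp_all add: betti_deg_def diff_deg_def)
  have "coeff (?C (k + 1)) 0 = coeff (expoly_shift 1 (EE j) (j + 1)) 0 * coeff (expoly_shift 2 (EE ?l) (k - j)) 0"
    using coeff_expoly_conv_top[OF db1 db2 conv_compatible_betti[OF j]] j deg0 by (simp add: jk)
  also have "\<dots> = (of_nat (j + 1) * betti_lead j) * (of_nat (k - j)^2 * betti_lead ?l)"
    using betti_expoly_top[OF Ej] betti_expoly_top[OF El] by (simp add: coeff_expoly_shift jk(2))
  finally have C: "coeff (?C (k + 1)) 0 = (of_nat (j + 1) * betti_lead j) * (of_nat (k - j)^2 * betti_lead ?l)" .
  have "degree (?C (k + 1)) \<le> 0"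
    using deg_bounded_degree[OF deg_bounded_conv[OF db1 db2 conv_compatible_betti[OF j]], of "k + 1"] deg0
    by simp
  then obtain c where c: "?C (k + 1) = [:c:]" by (metis degree_0_id le_zero_eq)
  then have "conv_full k EE j (k + 1) = [:c / of_nat (k + 1) / of_nat (k + 1):]"
    by (simp add: conv_full_def expoly_shift_back_def)
  then show ?thesis using C c by (simp add: power2_eq_square field_simps)
qed

lemma coeff_betti_diff_top: "coeff (betti_diff k EE (k + 1)) 0 * of_nat (k + 1) / of_nat k = betti_lead k"
proof -
  have zero: "EE j (k + 1) = 0" "EE (k - 1 - j) (k + 1) = 0" if "j < k" for j
    using supported_zero[OF betti_expoly_supported[OF IH[OF that]]] supported_zero[OF supported_compl[OF that]]
      that by auto
  have "coeff (conv_inner k EE j (k + 1)) 0 = coeff (conv_full k EE j (k + 1)) 0" if "j < k" for j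
    using zero[OF that] by (simp add: conv_inner_def conv_boundary0_def conv_boundary1_def
        conv_boundary_last_def expoly_mult_n_minus_2_def expoly_shift_back_def)
  moreover have "EE (k - 1) (k + 1) = 0" using zero[of 0] k by simp
  ultimately have "coeff (betti_diff k EE (k + 1)) 0 = (\<Sum>j<k. coeff (conv_full k EE j (k + 1)) 0)"
    by (simp add: betti_diff_def expoly_sum_def expoly_shift_back_def coeff_sum)
  also have "\<dots> = (\<Sum>j<k. betti_lead j * betti_lead (k - 1 - j) * of_nat (j + 1) * of_nat (k - j)^2
      / of_nat (k + 1)^2)"
    by (rule sum.cong) (simp_all only: lessThan_iff coeff_conv_full_top)
  also have "\<dots> = (\<Sum>j<k. betti_lead j * betti_lead (k - 1 - j) * of_nat (j + 1) * of_nat (k - j)^2)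
      / of_nat (k + 1)^2"
    by (simp add: sum_divide_distrib)
  also have "\<dots> = of_nat k * of_nat (k + 1) * betti_lead k / of_nat (k + 1)^2"
    using betti_lead_recursion[of "k - 1"] k by simp
  finally have top: "coeff (betti_diff k EE (k + 1)) 0 = of_nat k * of_nat (k + 1) * betti_lead k / of_nat (k + 1)^2" .
  have cancel: "k' * K * c / K^2 * K / k' = c" if "K \<noteq> 0" "k' \<noteq> 0" for K k' c :: rat
    using that by (simp add: field_simps power2_eq_square)
  show ?thesis unfolding top by (rule cancel) (use k in simp_all)
qed

lemma expoly_val_conv_full:
  assumes "j < k" "2 \<le> n"
  shows "expoly_val (k + 1) (conv_full k EE j) n =
    (\<Sum>s\<le>n - 2. of_nat ((n - 2) choose s) * expoly_val (j + 1) (EE j) (s + 1)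
       * expoly_val (k - j) (EE (k - 1 - j)) (n - 2 - s + 2))"
proof -
  let ?C = "expoly_conv (expoly_shift 1 (EE j)) (expoly_shift 2 (EE (k - 1 - j)))"
  have s1: "supported (j + 1) (expoly_shift 1 (EE j))"
    using supported_shift[OF betti_expoly_supported[OF IH[OF assms(1)]]] .
  have s2: "supported (k - j) (expoly_shift 2 (EE (k - 1 - j)))"
    using supported_shift[OF supported_compl[OF assms(1)]] .
  have jk: "j + 1 + (k - j) = k + 1" using assms(1) by simp
  have sC: "supported (k + 1) ?C" using supported_conv[OF s1 s2] unfolding jk .
  have "expoly_val (k + 1) (conv_full k EE j) n = expoly_val (k + 1) (expoly_shift_back ?C) (n - 1)"
    unfolding conv_full_def
    by (rule expoly_val_shift_back[OF supported_shift_back[OF sC]]) (use assms(2) in simp)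
  also have "\<dots> = expoly_val (k + 1) ?C (n - 2)"
    using expoly_val_shift_back[OF sC, of "n - 1"] assms(2) by (simp add: diff_diff_add numeral_2_eq_2)
  also have "\<dots> = (\<Sum>s\<le>n - 2. of_nat ((n - 2) choose s) * expoly_val (j + 1) (expoly_shift 1 (EE j)) s
       * expoly_val (k - j) (expoly_shift 2 (EE (k - 1 - j))) (n - 2 - s))"
    using expoly_val_conv[OF s1 s2] unfolding jk .
  finally show ?thesis by (simp add: expoly_val_shift)
qed

lemma expoly_val_conv_inner_eq:
  assumes j: "j < k" and n: "1 \<le> n"
  shows "expoly_val (k + 1) (conv_inner k EE j) n = expoly_val (k + 1) (conv_full k EE j) n
    - expoly_val (j + 1) (EE j) 1 * expoly_val (k - j) (EE (k - 1 - j)) n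
    - (of_nat n - 2) * expoly_val (j + 1) (EE j) 2 * expoly_val (k - j) (EE (k - 1 - j)) (n - 1)
    - expoly_val (j + 1) (EE j) (n - 1) * expoly_val (k - j) (EE (k - 1 - j)) 2"
proof -
  have sV: "supported (j + 1) (EE j)" and sW: "supported (k - j) (EE (k - 1 - j))"
    using betti_expoly_supported[OF IH[OF j]] supported_compl[OF j] by simp_all
  have "expoly_val (k + 1) (EE (k - 1 - j)) n = expoly_val (k - j) (EE (k - 1 - j)) n"
    using expoly_val_mono[OF sW, of "k + 1"] by simp
  moreover have "expoly_val (k + 1) (expoly_shift_back (EE (k - 1 - j))) n
      = expoly_val (k - j) (EE (k - 1 - j)) (n - 1)"
    using expoly_val_mono[OF supported_shift_back[OF sW], of "k + 1"] expoly_val_shift_back[OF sW] n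
    by simp
  moreover have "expoly_val (k + 1) (expoly_shift_back (EE j)) n = expoly_val (j + 1) (EE j) (n - 1)"
    using expoly_val_mono[OF supported_shift_back[OF sV], of "k + 1"] expoly_val_shift_back[OF sV] n j
    by simp
  ultimately show ?thesis
    by (simp add: conv_inner_def conv_boundary0_def conv_boundary1_def conv_boundary_last_def
        expoly_val_add expoly_val_smult expoly_val_mult_n_minus_2 algebra_simps)
qed

lemma expoly_val_conv_inner:
  assumes j: "j < k" and n: "4 \<le> n"
  shows "(\<Sum>i\<in>{3..n-2}. of_nat ((n - 2) choose (i - 1)) * (of_nat (rk_H i j) * of_nat (rk_H (n + 1 - i) (k - 1 - j))))
    = expoly_val (k + 1) (conv_inner k EE j) n"
proof -
  define V where "V m = expoly_val (j + 1) (EE j) m" for m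
  define W where "W m = expoly_val (k - j) (EE (k - 1 - j)) m" for m
  have "(\<Sum>i\<in>{3..n-2}. of_nat ((n - 2) choose (i - 1)) * (of_nat (rk_H i j) * of_nat (rk_H (n + 1 - i) (k - 1 - j))))
      = (\<Sum>i\<in>{3..n-2}. of_nat ((n - 2) choose (i - 1)) * (V i * W (n - 2 + 3 - i)))"
  proof (rule sum.cong)
    fix i assume "i \<in> {3..n-2}"
    then have "3 \<le> i" "3 \<le> n + 1 - i" "n - 2 + 3 - i = n + 1 - i" by auto
    then show "of_nat ((n - 2) choose (i - 1)) * (of_nat (rk_H i j) * of_nat (rk_H (n + 1 - i) (k - 1 - j)))
        = of_nat ((n - 2) choose (i - 1)) * (V i * W (n - 2 + 3 - i))"
      using betti_expoly_val[OF IH[OF j]] betti_expoly_val[OF betti_expoly_compl[OF j]] j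
      by (simp add: V_def W_def Suc_diff_Suc)
  qed simp
  also have "\<dots> = (\<Sum>s\<le>n - 2. of_nat ((n - 2) choose s) * V (s + 1) * W (n - 2 - s + 2))
      - V 1 * W (n - 2 + 2) - of_nat (n - 2) * V 2 * W (n - 2 + 1) - V (n - 2 + 1) * W 2"
    using n by (intro sum_choose_interior) simp
  also have "\<dots> = expoly_val (k + 1) (conv_inner k EE j) n"
  proof -
    have "n - 2 + 2 = n" "n - 2 + 1 = n - 1" "of_nat (n - 2) = (of_nat n - 2 :: rat)"
      using n by (simp_all add: of_nat_diff)
    then show ?thesis
      using expoly_val_conv_full[OF j, of n] expoly_val_conv_inner_eq[OF j, of n] n
      by (simp add: V_def W_def)
  qed
  finally show ?thesis .
qed

lemma expoly_val_betti_diff: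
  assumes n: "4 \<le> n"
  shows "of_nat (rk_H n k) - of_nat (rk_H (n - 1) k) = expoly_val (k + 1) (betti_diff k EE) n"
proof -
  have "(of_nat (rk_H n k) :: rat) - of_nat (rk_H (n - 1) k) = of_nat (rk_H (n - 1) (k - 1)) +
     (\<Sum>i\<in>{3..n-2}. of_nat ((n - 2) choose (i - 1))
        * (\<Sum>j\<le>k-1. of_nat (rk_H i j) * of_nat (rk_H (n + 1 - i) (k - 1 - j))))"
    unfolding rk_H_recursion[OF n k] by (simp add: of_nat_sum)
  also have "(\<Sum>i\<in>{3..n-2}. of_nat ((n - 2) choose (i - 1))
        * (\<Sum>j\<le>k-1. of_nat (rk_H i j) * of_nat (rk_H (n + 1 - i) (k - 1 - j))))
      = (\<Sum>j<k. \<Sum>i\<in>{3..n-2}. of_nat ((n - 2) choose (i - 1))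
          * (of_nat (rk_H i j) * of_nat (rk_H (n + 1 - i) (k - 1 - j)) :: rat))"
  proof -
    have "{..k - 1} = {..<k}" using k by auto
    then show ?thesis by (simp add: sum_distrib_left sum.swap[of _ "{3..n-2}"])
  qed
  also have "\<dots> = (\<Sum>j<k. expoly_val (k + 1) (conv_inner k EE j) n)"
    by (rule sum.cong) (simp_all only: lessThan_iff expoly_val_conv_inner[OF _ n])
  also have "of_nat (rk_H (n - 1) (k - 1)) = expoly_val (k + 1) (expoly_shift_back (EE (k - 1))) n"
    using betti_expoly_val[OF IH[of "k - 1"], of "n - 1"] n k
      expoly_val_mono[OF supported_shift_back[OF supported_compl[of 0]], of "k + 1"]
      expoly_val_shift_back[OF supported_compl[of 0], of n]
    by simp
  finally show ?thesis by (simp add: betti_diff_def expoly_val_add expoly_val_sum)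
qed

end

lemma betti_expoly_exists: "\<exists>E. betti_expoly k E"
proof (induction k rule: less_induct)
  case (less k)
  show ?case
  proof (cases "k = 0")
    case True
    then show ?thesis using betti_expoly_0 by blast
  next
    case False
    then have k: "1 \<le> k" by simp
    define EE where "EE j = (SOME E. betti_expoly j E)" for j
    have IH: "betti_expoly j (EE j)" if "j < k" for j
    proof -
      have "\<exists>E. betti_expoly j E" using less that by blast
      then show ?thesis unfolding EE_def by (rule someI_ex)
    qed
    show ?thesis
      by (rule betti_expoly_of_diff[OF k top_signs_betti_diff[OF k IH] top_sign_strict_betti_diff[OF k IH]
          coeff_betti_diff_top[OF k IH] expoly_val_betti_diff[OF k IH]])
  qed
qed

lemma betti_expoly_top_degree:
  assumes E: "betti_expoly k E" and m: "m \<in> {1..k}"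
  shows "degree (E (k + 1 - m)) = 2 * m" "0 < (-1)^m * lead_coeff (E (k + 1 - m))"
proof -
  let ?r = "k + 1 - m"
  have deg: "betti_deg k ?r = 2 * m" and sign: "betti_sign k ?r = (-1)^m"
    using m by (auto simp: betti_deg_def betti_sign_def)
  have "top_sign_strict ?r (betti_deg k) (betti_sign k) E" using m by (intro betti_expoly_strict[OF E]) auto
  then have pos: "0 < (-1)^m * coeff (E ?r) (2 * m)" by (simp only: top_sign_strict_def deg sign)
  then have "2 * m \<le> degree (E ?r)" by (intro le_degree) auto
  moreover have "degree (E ?r) \<le> 2 * m"
    using deg_bounded_degree[OF betti_expoly_deg_bounded[OF E], of ?r] by (simp only: deg)
  ultimately show "degree (E ?r) = 2 * m" by (rule antisym[rotated])
  with pos show "0 < (-1)^m * lead_coeff (E ?r)" by simp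
qed

lemma betti_expoly_val_split:
  assumes E: "betti_expoly k E"
  shows "expoly_val (k + 1) E n = betti_lead k * of_nat (k + 1) ^ n
    + (\<Sum>m=1..k. poly (E (k + 1 - m)) (of_nat n) * of_nat (k + 1 - m) ^ n)"
proof -
  define f where "f r = poly (E r) (of_nat n) * of_nat r ^ n" for r
  have "expoly_val (k + 1) E n = f 0 + (\<Sum>r=1..k. f r) + f (k + 1)"
    by (simp add: expoly_val_def f_def atMost_atLeast0 sum.atLeast_Suc_atMost)
  also have "f 0 = 0" using supported_zero[OF betti_expoly_supported[OF E], of 0] by (simp add: f_def)
  also have "(\<Sum>r=1..k. f r) = (\<Sum>m=1..k. f (k + 1 - m))"
    using sum.atLeastAtMost_rev[of f 1 k] by (simp add: add.commute)
  also have "f (k + 1) = betti_lead k * of_nat (k + 1) ^ n"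
    using betti_expoly_top[OF E] by (simp add: f_def)
  finally show ?thesis by (simp add: f_def)
qed

theorem mainTheorem11:
  fixes k :: nat
  assumes "k \<ge> 1"
  shows "\<exists>q :: nat \<Rightarrow> rat poly.
           (\<forall>m\<in>{1..k}. degree (q m) = 2 * m \<and> lead_coeff (q m) > 0) \<and>
           (\<forall>n\<ge>3. (of_nat (rk_H n k) :: rat) =
               of_nat ((k + 1) ^ (k - 1)) / of_nat (fact (k + 1)) * of_nat (k + 1) ^ n
               + (\<Sum>m=1..k. (-1) ^ m * poly (q m) (of_nat n) * of_nat (k + 1 - m) ^ n))"
proof -
  obtain E where E: "betti_expoly k E" using betti_expoly_exists by blast
  define q where "q m = smult ((-1)^m) (E (k + 1 - m))" for m
  have "degree (q m) = 2 * m \<and> lead_coeff (q m) > 0" if "m \<in> {1..k}" for m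
    using betti_expoly_top_degree[OF E that] by (simp add: q_def)
  moreover have "(-1)^m * poly (q m) x = poly (E (k + 1 - m)) x" for m x
    by (simp add: q_def flip: power_mult_distrib)
  then have "of_nat (rk_H n k) = of_nat ((k + 1) ^ (k - 1)) / of_nat (fact (k + 1)) * of_nat (k + 1) ^ n
      + (\<Sum>m=1..k. (-1) ^ m * poly (q m) (of_nat n) * of_nat (k + 1 - m) ^ n)" if "3 \<le> n" for n
    using betti_expoly_val[OF E that] betti_expoly_val_split[OF E, of n]
    by (simp add: betti_lead_def mult.assoc)
  ultimately show ?thesis by blast
qed

end
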